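(* Let $n,p,\ell$ be positive integers, $A\in\mathbb{R}^{n\times n}$, $C\in\mathbb{R}^{p\times n}$, $X_0,W\in\mathbb{R}^{n\times n}$ symmetric positive definite, $V=\operatorname{diag}(\sigma_{v,1}^2,\dots,\sigma_{v,p}^2)$ with all $\sigma_{v,i}>0$, $\mathcal{I}=\{1,\dots,p\}$, and let $s\le p$ be a positive integer. Let $f$, $\gamma$, $\alpha$, $\underline{\gamma}$, $\overline{\alpha}$ be as defined in the context, and consider the problem of maximizing $f(\mathcal{S})$ over $\mathcal{S}\subseteq\mathcal{I}$ subject to $|\mathcal{S}|\le s$. Let $\mathcal{S}^*$ be an optimal solution and $\mathcal{S}^{\mathrm{g}}$ the output of the greedy algorithm described in the context. Then $$f(\mathcal{S}^{\mathrm{g}})\ge\frac{1}{\alpha}\left(1-e^{-\alpha\gamma}\right)f(\mathcal{S}^* )\ge\frac{1}{\overline{\alpha}}\left(1-e^{-\overline{\alpha}\,\underline{\gamma}}\right)f(\mathcal{S}^* ).$$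
   Context: Let $\Phi\in\mathbb{R}^{n\ell\times n\ell}$ be the block lower-triangular matrix whose $(i,j)$ block ($i,j=1,\dots,\ell$) is $A^{i-j}$ for $i\ge j$ (with $A^0=I_n$) and $0$ for $i<j$. Let $Z=\operatorname{diag}(X_0,W,\dots,W)$ (block diagonal with $\ell$ blocks) and $L:=Z^{-1}$. For $\mathcal{S}=\{\theta_1<\dots<\theta_m\}\subseteq\mathcal{I}$, the selection matrix $S_{\mathcal{S}}\in\mathbb{R}^{m\times p}$ has $[S_{\mathcal{S}}]_{i,j}=1$ if $j=\theta_i$ and $0$ otherwise; set $G=\{I_\ell\otimes(S_{\mathcal{S}}C)\}\Phi$, $V_{\mathcal{S}}=I_\ell\otimes(S_{\mathcal{S}}VS_{\mathcal{S}}^\top)$, $U_{\mathcal{S}}:=G^\top V_{\mathcal{S}}^{-1}G$, with $U_\emptyset=0$. Define $J(\mathcal{S}):=\operatorname{tr}[(L+U_{\mathcal{S}})^{-1}]$ (the smoothing mean square error for $x_{k+1}=Ax_k+w_k$, $y_k=Cx_k+v_k$ over times $0,\dots,\ell-1$ using outputs indexed by $\mathcal{S}$) and $f(\mathcal{S}):=J(\emptyset)-J(\mathcal{S})$. Let $\underline{\gamma}:=\lambda_{\min}(L)/\lambda_{\max}(L+U_{\mathcal{I}})$ and $\overline{\alpha}:=1-\{\lambda_{\min}(L)\}^2/\{\lambda_{\max}(L+U_{\mathcal{I}})\}^2$. With $\rho_\Omega(\mathcal{S}):=f(\mathcal{S}\cup\Omega)-f(\mathcal{S})$, the submodularity ratio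 $\gamma$ of $f$ is the largest scalar with $\sum_{\omega\in\Omega\setminus\mathcal{S}}\rho_{\{\omega\}}(\mathcal{S})\ge\gamma\rho_\Omega(\mathcal{S})$ for all $\Omega,\mathcal{S}\subseteq\mathcal{I}$, and the curvature $\alpha$ of $f$ is the smallest scalar with $\rho_{\{j\}}(\mathcal{S}\setminus\{j\}\cup\Omega)\ge(1-\alpha)\rho_{\{j\}}(\mathcal{S}\setminus\{j\})$ for all $\Omega,\mathcal{S}\subseteq\mathcal{I}$, $j\in\mathcal{S}\setminus\Omega$. The greedy algorithm: set $\mathcal{S}_0=\emptyset$; for $i=1,\dots,s$ choose $\omega^*\in\arg\max_{\omega\in\mathcal{I}\setminus\mathcal{S}_{i-1}}[f(\mathcal{S}_{i-1}\cup\{\omega\})-f(\mathcal{S}_{i-1})]$ and set $\mathcal{S}_i=\mathcal{S}_{i-1}\cup\{\omega^*\}$; output $\mathcal{S}^{\mathrm{g}}=\mathcal{S}_s$. *)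

theory Defs
  imports "Jordan_Normal_Form.Gauss_Jordan_Elimination" "Jordan_Normal_Form.Char_Poly"
begin

definition mtrace :: "real mat \<Rightarrow> real" where
  "mtrace M = (\<Sum>i<dim_row M. M $$ (i, i))"

definition minv :: "real mat \<Rightarrow> real mat" where
  "minv M = the (mat_inverse M)"

definition sym_posdef :: "nat \<Rightarrow> real mat \<Rightarrow> bool" where
  "sym_posdef n M \<longleftrightarrow> M \<in> carrier_mat n n \<and> transpose_mat M = M \<and>
     (\<forall>x \<in> carrier_vec n. x \<noteq> 0\<^sub>v n \<longrightarrow> x \<bullet> (M *\<^sub>v x) > 0)"

definition lambda_min :: "real mat \<Rightarrow> real" where
  "lambda_min M = Min {k. eigenvalue M k}"

definition lambda_max :: "real mat \<Rightarrow> real" where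
  "lambda_max M = Max {k. eigenvalue M k}"

text \<open>Phi: (i,j) block is A^(i-j) for i >= j, 0 otherwise; l x l blocks of size n.\<close>
definition Phi_mat :: "nat \<Rightarrow> nat \<Rightarrow> real mat \<Rightarrow> real mat" where
  "Phi_mat n l A = mat (n*l) (n*l) (\<lambda>(r, c).
     if c div n \<le> r div n then (A ^\<^sub>m (r div n - c div n)) $$ (r mod n, c mod n) else 0)"

text \<open>Z = diag(X0, W, ..., W) with l blocks.\<close>
definition Z_mat :: "nat \<Rightarrow> nat \<Rightarrow> real mat \<Rightarrow> real mat \<Rightarrow> real mat" where
  "Z_mat n l X0 W = mat (n*l) (n*l) (\<lambda>(r, c).
     if r div n = c div n then (if r div n = 0 then X0 else W) $$ (r mod n, c mod n) else 0)"

text \<open>Kronecker product I_l \<otimes> M (block diagonal with l copies of M).\<close>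
definition kron_eye :: "nat \<Rightarrow> real mat \<Rightarrow> real mat" where
  "kron_eye l M = mat (l * dim_row M) (l * dim_col M) (\<lambda>(r, c).
     if r div dim_row M = c div dim_col M
     then M $$ (r mod dim_row M, c mod dim_col M) else 0)"

text \<open>Selection matrix: row i selects the i-th smallest element of S (indices 0-based).\<close>
definition sel_mat :: "nat \<Rightarrow> nat set \<Rightarrow> real mat" where
  "sel_mat p S = mat (card S) p (\<lambda>(i, j). if j = sorted_list_of_set S ! i then 1 else 0)"

definition V_mat :: "nat \<Rightarrow> (nat \<Rightarrow> real) \<Rightarrow> real mat" where
  "V_mat p sigma = mat p p (\<lambda>(i, j). if i = j then (sigma i)\<^sup>2 else 0)"

definition L_mat :: "nat \<Rightarrow> nat \<Rightarrow> real mat \<Rightarrow> real mat \<Rightarrow> real mat" where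
  "L_mat n l X0 W = minv (Z_mat n l X0 W)"

definition G_mat :: "nat \<Rightarrow> nat \<Rightarrow> nat \<Rightarrow> real mat \<Rightarrow> real mat \<Rightarrow> nat set \<Rightarrow> real mat" where
  "G_mat n p l A C S = kron_eye l (sel_mat p S * C) * Phi_mat n l A"

definition VS_mat :: "nat \<Rightarrow> nat \<Rightarrow> (nat \<Rightarrow> real) \<Rightarrow> nat set \<Rightarrow> real mat" where
  "VS_mat p l sigma S = kron_eye l (sel_mat p S * V_mat p sigma * transpose_mat (sel_mat p S))"

definition U_mat :: "nat \<Rightarrow> nat \<Rightarrow> nat \<Rightarrow> real mat \<Rightarrow> real mat \<Rightarrow> (nat \<Rightarrow> real) \<Rightarrow> nat set \<Rightarrow> real mat" where
  "U_mat n p l A C sigma S = (if S = {} then 0\<^sub>m (n*l) (n*l) else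
     transpose_mat (G_mat n p l A C S) * minv (VS_mat p l sigma S) * G_mat n p l A C S)"

definition J_fun :: "nat \<Rightarrow> nat \<Rightarrow> nat \<Rightarrow> real mat \<Rightarrow> real mat \<Rightarrow> real mat \<Rightarrow> real mat
    \<Rightarrow> (nat \<Rightarrow> real) \<Rightarrow> nat set \<Rightarrow> real" where
  "J_fun n p l A C X0 W sigma S = mtrace (minv (L_mat n l X0 W + U_mat n p l A C sigma S))"

definition f_fun :: "nat \<Rightarrow> nat \<Rightarrow> nat \<Rightarrow> real mat \<Rightarrow> real mat \<Rightarrow> real mat \<Rightarrow> real mat
    \<Rightarrow> (nat \<Rightarrow> real) \<Rightarrow> nat set \<Rightarrow> real" where
  "f_fun n p l A C X0 W sigma S = J_fun n p l A C X0 W sigma {} - J_fun n p l A C X0 W sigma S"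

definition gamma_lb :: "nat \<Rightarrow> nat \<Rightarrow> nat \<Rightarrow> real mat \<Rightarrow> real mat \<Rightarrow> real mat \<Rightarrow> real mat
    \<Rightarrow> (nat \<Rightarrow> real) \<Rightarrow> real" where
  "gamma_lb n p l A C X0 W sigma = lambda_min (L_mat n l X0 W)
     / lambda_max (L_mat n l X0 W + U_mat n p l A C sigma {..<p})"

definition alpha_ub :: "nat \<Rightarrow> nat \<Rightarrow> nat \<Rightarrow> real mat \<Rightarrow> real mat \<Rightarrow> real mat \<Rightarrow> real mat
    \<Rightarrow> (nat \<Rightarrow> real) \<Rightarrow> real" where
  "alpha_ub n p l A C X0 W sigma = 1 - (lambda_min (L_mat n l X0 W))\<^sup>2
     / (lambda_max (L_mat n l X0 W + U_mat n p l A C sigma {..<p}))\<^sup>2"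

definition marg :: "(nat set \<Rightarrow> real) \<Rightarrow> nat set \<Rightarrow> nat set \<Rightarrow> real" where
  "marg f Om S = f (S \<union> Om) - f S"

definition subm_ratio :: "(nat set \<Rightarrow> real) \<Rightarrow> nat set \<Rightarrow> real" where
  "subm_ratio f I = (GREATEST g. g \<in> {0..1} \<and>
     (\<forall>Om S. Om \<subseteq> I \<longrightarrow> S \<subseteq> I \<longrightarrow>
        (\<Sum>w\<in>Om - S. marg f {w} S) \<ge> g * marg f Om S))"

definition curvature :: "(nat set \<Rightarrow> real) \<Rightarrow> nat set \<Rightarrow> real" where
  "curvature f I = (LEAST a. a \<in> {0..1} \<and>
     (\<forall>Om S j. Om \<subseteq> I \<longrightarrow> S \<subseteq> I \<longrightarrow> j \<in> S - Om \<longrightarrow>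
        marg f {j} ((S - {j}) \<union> Om) \<ge> (1 - a) * marg f {j} (S - {j})))"

text \<open>Output Sg of the greedy algorithm (any tie-breaking) run for s steps.\<close>
definition greedy_output :: "(nat set \<Rightarrow> real) \<Rightarrow> nat set \<Rightarrow> nat \<Rightarrow> nat set \<Rightarrow> bool" where
  "greedy_output f I s Sg \<longleftrightarrow> (\<exists>Sq :: nat \<Rightarrow> nat set. Sq 0 = {} \<and>
     (\<forall>i<s. \<exists>w \<in> I - Sq i. Sq (Suc i) = insert w (Sq i) \<and>
        (\<forall>w' \<in> I - Sq i. f (insert w' (Sq i)) - f (Sq i) \<le> f (Sq (Suc i)) - f (Sq i))) \<and>
     Sg = Sq s)"

text \<open>(1/a)(1 - exp(-a g)), continuously extended by g at a = 0.\<close>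
definition bound_factor :: "real \<Rightarrow> real \<Rightarrow> real" where
  "bound_factor a g = (if a = 0 then g else (1 / a) * (1 - exp (- a * g)))"

end

theory Submission
  imports Defs "HOL-Analysis.Convex" "HOL-Analysis.Function_Topology"
begin

(* The first inequality is the greedy guarantee for a monotone set function with f {} = 0,
   submodularity ratio gamma and curvature alpha. Let S_t be the greedy set after t steps and
   rho_t the gain of step t. Curvature gives f (S* \<union> S_t) \<ge> f S* + (1 - alpha) A_t, where A_t sums
   the gains of the earlier steps that picked an element outside S*; the submodularity ratio and
   the greedy choice give gamma (f (S* \<union> S_t) - f S_t) \<le> |S* - S_t| rho_t. A backward recursion over
   the steps turns these inequalities into f S^g \<ge> (1/alpha) (1 - exp (- alpha gamma)) f S*.

   For the smoothing problem, J S = tr (M_S^-1) with M_S = L + U_S, and for S \<subseteq> T the update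
   U_T - U_S is positive semidefinite, its form being a sum of squares over the sensors in T - S.
   All M_S lie between lambda_min L and lambda_max M_I, so c M_T \<le> M_S with
   c = lambda_min L / lambda_max M_I. Comparing M_S^-1 and M_T^-1 along the update then yields
   gamma \<ge> c and 1 - alpha \<ge> c^2; as bound_factor increases in gamma and decreases in alpha,
   the second inequality follows. *)

section \<open>Greedy maximization under a submodularity ratio and curvature\<close>

lemma bound_factor_nonneg:
  assumes "0 \<le> a" "0 \<le> g"
  shows "0 \<le> bound_factor a g"
  using assms by (auto simp: bound_factor_def mult_nonneg_nonneg)

lemma bound_factor_le:
  assumes "0 \<le> a" "0 \<le> g"
  shows "bound_factor a g \<le> g"
proof (cases "a = 0")
  case False
  have "1 - exp (- a * g) \<le> a * g"
    using exp_ge_add_one_self[of "- a * g"] by simp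
  with False assms show ?thesis by (simp add: bound_factor_def field_simps)
qed (simp add: bound_factor_def)

lemma bound_factor_mono_right:
  assumes "0 \<le> a" "g1 \<le> g2"
  shows "bound_factor a g1 \<le> bound_factor a g2"
proof (cases "a = 0")
  case False
  then have "a > 0" using assms by auto
  moreover have "exp (- a * g2) \<le> exp (- a * g1)" using \<open>a > 0\<close> assms by (simp add: mult_left_mono)
  ultimately show ?thesis by (simp add: bound_factor_def divide_right_mono)
qed (use assms in \<open>simp add: bound_factor_def\<close>)

lemma bound_factor_antimono_left:
  assumes "0 \<le> a1" "a1 \<le> a2" "0 \<le> g"
  shows "bound_factor a2 g \<le> bound_factor a1 g"
proof (cases "a1 = 0")
  case True
  then show ?thesis using bound_factor_le[of a2 g] assms by (simp add: bound_factor_def)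
next
  case False
  then have a1: "a1 > 0" and a2: "a2 > 0" using assms by auto
  define lam where "lam = a1 / a2"
  have lam: "0 \<le> lam" "lam \<le> 1" using assms a2 by (auto simp: lam_def)
  \<comment> \<open>\<open>bound_factor a g\<close> is the slope of the chord from \<open>0\<close> to \<open>a\<close> of the concave \<open>\<lambda>a. 1 - exp (- a * g)\<close>\<close>
  have "exp ((1 - lam) * 0 + lam * (- (a2 * g))) \<le> (1 - lam) * exp 0 + lam * exp (- (a2 * g))"
    using convex_onD[OF exp_convex, of lam 0 "- (a2 * g)"] lam by simp
  moreover have "lam * (a2 * g) = a1 * g" using a2 by (simp add: lam_def)
  ultimately have "(a1 / a2) * (1 - exp (- (a2 * g))) \<le> 1 - exp (- (a1 * g))"
    by (simp add: lam_def algebra_simps)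
  then show ?thesis using a1 a2 by (simp add: bound_factor_def field_simps)
qed

text \<open>One step of the backward recursion of the greedy analysis, for a step adding an element
  outside the optimum (weight \<open>a\<close>) and one adding an element of it (weight \<open>1\<close>, one optimal element
  fewer left).\<close>

lemma bound_factor_step:
  fixes Y a g r K :: real
  assumes a: "0 \<le> a" "a \<le> 1" and g: "0 \<le> g" "g \<le> 1"
    and r: "0 \<le> r" "r + 1 \<le> K"
    and Y: "Y \<le> r / K" "bound_factor a (g * r / K) \<le> Y"
  defines "Y' \<equiv> Y * (1 - a * g / K) + g / K"
  shows "Y' \<le> (r + 1) / K" "bound_factor a (g * (r + 1) / K) \<le> Y'"
proof -
  have K: "K > 0" using r by auto
  have "a * g \<le> 1" using a g by (simp add: mult_le_one)
  then have q: "0 \<le> 1 - a * g / K" "1 - a * g / K \<le> 1"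
    using a g r K by (auto simp: field_simps)
  have "0 \<le> Y" using Y(2) bound_factor_nonneg[of a "g * r / K"] a g r K by simp
  then have "Y * (1 - a * g / K) \<le> r / K" using Y(1) q by (meson mult_left_le order_trans)
  moreover have "g / K \<le> 1 / K" using g K by (simp add: divide_right_mono)
  ultimately show "Y' \<le> (r + 1) / K" unfolding Y'_def by (simp add: add_divide_distrib)
  show "bound_factor a (g * (r + 1) / K) \<le> Y'"
  proof (cases "a = 0")
    case True
    then show ?thesis using Y unfolding Y'_def by (simp add: bound_factor_def add_divide_distrib distrib_left)
  next
    case False
    then have "a > 0" using a by auto
    have IH: "1 - exp (- a * (g * r / K)) \<le> a * Y"
      using Y(2) \<open>a > 0\<close> by (simp add: bound_factor_def field_simps)
    have "exp (- a * (g * (r + 1) / K)) = exp (- a * (g * r / K)) * exp (- (a * g / K))"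
      using K by (simp add: exp_add[symmetric] field_simps)
    also have "\<dots> \<ge> exp (- a * (g * r / K)) * (1 - a * g / K)"
      using exp_ge_add_one_self[of "- (a * g / K)"] by (intro mult_left_mono) auto
    finally have "1 - exp (- a * (g * (r + 1) / K)) \<le> 1 - exp (- a * (g * r / K)) * (1 - a * g / K)"
      by simp
    also have "\<dots> = (1 - exp (- a * (g * r / K))) * (1 - a * g / K) + a * g / K"
      by (simp add: algebra_simps)
    also have "\<dots> \<le> a * Y * (1 - a * g / K) + a * g / K"
      using IH q by (intro add_right_mono mult_right_mono) auto
    also have "\<dots> = a * Y'" unfolding Y'_def by (simp add: algebra_simps)
    finally show ?thesis using \<open>a > 0\<close> by (simp add: bound_factor_def field_simps)
  qed
qed

lemma exp_decay_shift_le: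
  fixes a g r k :: real
  assumes a: "0 \<le> a" "a \<le> 1" and g: "0 \<le> g" "g \<le> 1" and r: "0 \<le> r" "r \<le> k"
  shows "exp (- (a * g * r / k)) * (1 - g / (k + 1)) + g * (1 - a) / (k + 1)
         \<le> exp (- (a * g * (r + 1) / (k + 1)))"
proof (cases "r = 0")
  case True
  then show ?thesis
    using exp_ge_add_one_self[of "- (a * g / (k + 1))"] by (simp add: right_diff_distrib diff_divide_distrib mult.commute)
next
  case False
  then have k: "k > 0" using r by auto
  define x where "x = a * g * r / k"
  define y where "y = a * g * (r + 1) / (k + 1)"
  define c where "c = a * r / k"
  have c: "0 \<le> c" "c \<le> a" using a r k by (auto simp: c_def field_simps intro: mult_left_mono)
  have "x = g * c" unfolding x_def c_def by simp
  then have "x \<le> c" using mult_left_le_one_le[OF c(1) g] by simp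
  then have "1 - c \<le> exp (- x)"
    using exp_ge_add_one_self[of "- c"] exp_le_cancel_iff[of "- c" "- x"] by linarith
  then have "(1 - c) * (1 - a + c) \<le> exp (- x) * (1 - a + c)"
    using a c by (intro mult_right_mono) auto
  moreover have "1 - a \<le> (1 - c) * (1 - a + c)"
    using mult_right_mono[OF c(2) c(1)] by (simp add: algebra_simps)
  ultimately have main: "1 - a \<le> exp (- x) * (1 - a + c)" by linarith
  have yx: "g / (k + 1) - (y - x) = g / (k + 1) * (1 - a + c)"
    using k unfolding x_def y_def c_def by (simp add: divide_simps) (simp add: algebra_simps)
  have "g * (1 - a) / (k + 1) \<le> g / (k + 1) * (exp (- x) * (1 - a + c))"
    using divide_right_mono[OF mult_left_mono[OF main g(1)], of "k + 1"] k by simp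
  also have "\<dots> = exp (- x) * (g / (k + 1) - (y - x))" using yx by simp
  finally have h: "g * (1 - a) / (k + 1) \<le> exp (- x) * (g / (k + 1) - (y - x))" .
  have "1 - (y - x) \<le> exp (- (y - x))" using exp_ge_add_one_self[of "- (y - x)"] by linarith
  then have "exp (- x) * (1 - (y - x)) \<le> exp (- x) * exp (- (y - x))" by simp
  also have "\<dots> = exp (- y)" by (simp add: exp_add[symmetric])
  finally have "exp (- x) * (1 - g / (k + 1)) + g * (1 - a) / (k + 1) \<le> exp (- y)"
    using h by (simp add: algebra_simps)
  then show ?thesis unfolding x_def y_def by simp
qed

lemma bound_factor_step_shift:
  fixes Y a g r k :: real
  assumes a: "0 \<le> a" "a \<le> 1" and g: "0 \<le> g" "g \<le> 1"
    and r: "0 \<le> r" "r \<le> k"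
    and Y: "Y \<le> r / k" "bound_factor a (g * r / k) \<le> Y"
  defines "Y' \<equiv> Y * (1 - g / (k + 1)) + g / (k + 1)"
  shows "Y' \<le> (r + 1) / (k + 1)" "bound_factor a (g * (r + 1) / (k + 1)) \<le> Y'"
proof -
  have K: "k + 1 > 0" using r by auto
  have q: "0 \<le> 1 - g / (k + 1)" using g r by (simp add: field_simps)
  have Y0: "0 \<le> Y" using Y(2) bound_factor_nonneg[of a "g * r / k"] a g r by simp
  show "Y' \<le> (r + 1) / (k + 1)"
  proof (cases "k = 0")
    case True
    then show ?thesis using r Y(1) Y0 g unfolding Y'_def by simp
  next
    case False
    then have k: "k > 0" using r by auto
    have "Y * (1 - g / (k + 1)) \<le> r / k * (1 - g / (k + 1))"
      by (rule mult_right_mono[OF Y(1) q])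
    then have "Y' \<le> r / k * (1 - g / (k + 1)) + g / (k + 1)"
      unfolding Y'_def by linarith
    also have "\<dots> \<le> (r + 1) / (k + 1)"
    proof -
      have "r / k * (1 - g / (k + 1)) + g / (k + 1) = (r + 1) / (k + 1) - (1 - g) * (k - r) / (k * (k + 1))"
        using k by (simp add: divide_simps) (simp add: algebra_simps)
      moreover have "0 \<le> (1 - g) * (k - r) / (k * (k + 1))" using g r k by simp
      ultimately show ?thesis by linarith
    qed
    finally show ?thesis .
  qed
  show "bound_factor a (g * (r + 1) / (k + 1)) \<le> Y'"
  proof (cases "a = 0")
    case True
    have "g * (r + 1) / (k + 1) \<le> g * r / k * (1 - g / (k + 1)) + g / (k + 1)"
    proof (cases "k = 0")
      case False
      then have k: "k > 0" using r by auto
      have "g * r / k * (1 - g / (k + 1)) + g / (k + 1) = g * (r + 1) / (k + 1) + g * r * (1 - g) / (k * (k + 1))"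
        using k by (simp add: divide_simps) (simp add: algebra_simps)
      moreover have "0 \<le> g * r * (1 - g) / (k * (k + 1))" using g r k by simp
      ultimately show ?thesis by linarith
    qed (use r g in simp)
    also have "\<dots> \<le> Y'"
      using mult_right_mono[OF Y(2) q] True unfolding Y'_def by (simp add: bound_factor_def)
    finally show ?thesis using True by (simp add: bound_factor_def)
  next
    case False
    then have "a > 0" using a by auto
    have IH: "1 - exp (- (a * g * r / k)) \<le> a * Y"
      using Y(2) \<open>a > 0\<close> by (simp add: bound_factor_def field_simps)
    have "1 - exp (- (a * g * (r + 1) / (k + 1)))
        \<le> 1 - (exp (- (a * g * r / k)) * (1 - g / (k + 1)) + g * (1 - a) / (k + 1))"
      using exp_decay_shift_le[OF a g r] by linarith
    also have "\<dots> = (1 - exp (- (a * g * r / k))) * (1 - g / (k + 1)) + a * g / (k + 1)"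
      by (simp add: algebra_simps diff_divide_distrib)
    also have "\<dots> \<le> a * Y * (1 - g / (k + 1)) + a * g / (k + 1)"
      using IH q by (intro add_right_mono mult_right_mono) auto
    also have "\<dots> = a * Y'" unfolding Y'_def by (simp add: algebra_simps)
    finally have "1 - exp (- (a * g * (r + 1) / (k + 1))) \<le> Y' * a" by (simp add: mult.commute)
    moreover have "bound_factor a (g * (r + 1) / (k + 1)) = (1 - exp (- (a * g * (r + 1) / (k + 1)))) / a"
      using \<open>a > 0\<close> by (simp add: bound_factor_def)
    ultimately show ?thesis using \<open>a > 0\<close> by (simp add: divide_le_eq)
  qed
qed

lemma greedy_backward_step:
  fixes Y D R rho a g :: real and r k :: nat
  assumes a: "0 \<le> a" "a \<le> 1" and g: "0 \<le> g" "g \<le> 1" and "r + 1 \<le> k"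
    and gain: "g * D \<le> real k * rho"
    and Y: "Y \<le> real r / real (if inside then k - 1 else k)"
      "bound_factor a (g * real r / real (if inside then k - 1 else k)) \<le> Y"
      "Y * (D - (if inside then 1 else a) * rho) \<le> R"
  obtains Y' where "Y' \<le> real (Suc r) / real k" "bound_factor a (g * real (Suc r) / real k) \<le> Y'"
    "Y' * D \<le> rho + R"
proof -
  define c where "c = (if inside then 1 else a)"
  define Y' where "Y' = Y * (1 - c * g / real k) + g / real k"
  have bounds: "Y' \<le> real (Suc r) / real k \<and> bound_factor a (g * real (Suc r) / real k) \<le> Y'"
  proof (cases inside)
    case True
    obtain k' where k': "k = Suc k'" using \<open>r + 1 \<le> k\<close> by (cases k) auto
    then have Y1: "Y \<le> real r / real k'" "bound_factor a (g * real r / real k') \<le> Y"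
      using Y(1,2) True by simp_all
    have "real r \<le> real k'" using \<open>r + 1 \<le> k\<close> k' by simp
    then show ?thesis using bound_factor_step_shift[OF a g _ _ Y1] True k'
      by (simp add: Y'_def c_def add.commute)
  next
    case False
    then have Y1: "Y \<le> real r / real k" "bound_factor a (g * real r / real k) \<le> Y"
      using Y(1,2) by simp_all
    have "real r + 1 \<le> real k" using \<open>r + 1 \<le> k\<close> by simp
    then show ?thesis using bound_factor_step[OF a g _ _ Y1] False by (simp add: Y'_def c_def add.commute)
  qed
  have "0 \<le> bound_factor a (g * real r / real (if inside then k - 1 else k))"
    using a g by (intro bound_factor_nonneg) auto
  moreover have "real r / real (if inside then k - 1 else k) \<le> 1"
    using \<open>r + 1 \<le> k\<close> by (auto simp: divide_le_eq_1)
  ultimately have "0 \<le> Y" "Y \<le> 1" using Y(1,2) by linarith+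
  moreover have "c \<le> 1" using a by (simp add: c_def)
  ultimately have cY: "0 \<le> 1 - c * Y" using mult_le_one[of c Y] by linarith
  have "k > 0" using \<open>r + 1 \<le> k\<close> by simp
  then have "g * D / real k \<le> rho" using gain by (simp add: divide_le_eq mult.commute)
  then have "g * D / real k * (1 - c * Y) \<le> rho * (1 - c * Y)" by (rule mult_right_mono[OF _ cY])
  moreover have "Y' * D = g * D / real k * (1 - c * Y) + Y * D"
    using \<open>k > 0\<close> by (simp add: Y'_def field_simps)
  moreover have "rho * (1 - c * Y) + Y * D = rho + Y * (D - c * rho)" by (simp add: algebra_simps)
  ultimately have "Y' * D \<le> rho + Y * (D - c * rho)" by linarith
  also have "\<dots> \<le> rho + R" using Y(3) by (simp add: c_def)
  finally show ?thesis using bounds that by blast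
qed

lemma greedy_gains_lower_bound:
  fixes rho :: "nat \<Rightarrow> real" and inside :: "nat \<Rightarrow> bool" and a g F :: real and s :: nat
  assumes a: "0 \<le> a" "a \<le> 1" and g: "0 \<le> g" "g \<le> 1" and "0 < s" and "0 \<le> F"
    and gain: "\<And>t. t < s \<Longrightarrow>
      g * (F - (\<Sum>i<t. (if inside i then 1 else a) * rho i))
        \<le> real (s - card {i. i < t \<and> inside i}) * rho t"
  shows "bound_factor a g * F \<le> (\<Sum>t<s. rho t)"
proof -
  define k where "k t = s - card {i. i < t \<and> inside i}" for t
  define D where "D t = F - (\<Sum>i<t. (if inside i then 1 else a) * rho i)" for t
  have card_le: "card {i. i < t \<and> inside i} \<le> t" for t
    using card_mono[of "{..<t}" "{i. i < t \<and> inside i}"] by auto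
  have k_Suc: "k (Suc t) = (if inside t then k t - 1 else k t)" for t
  proof -
    have "{i. i < Suc t \<and> inside i} = (if inside t then insert t else id) {i. i < t \<and> inside i}"
      by (auto simp: less_Suc_eq)
    then show ?thesis by (simp add: k_def)
  qed
  \<comment> \<open>\<open>Y\<close> bounds from below the share of \<open>D (s - r)\<close> collected by the last \<open>r\<close> greedy steps\<close>
  have backward: "\<exists>Y. Y \<le> real r / real (k (s - r)) \<and>
      bound_factor a (g * real r / real (k (s - r))) \<le> Y \<and>
      Y * D (s - r) \<le> (\<Sum>t\<in>{s - r..<s}. rho t)" if "r \<le> s" for r
    using that
  proof (induction r)
    case 0
    then show ?case by (intro exI[of _ 0]) (simp add: bound_factor_def)
  next
    case (Suc r)
    define i where "i = s - Suc r"
    have i: "i < s" "s - r = Suc i" using Suc.prems by (auto simp: i_def)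
    obtain Y where Y: "Y \<le> real r / real (k (Suc i))"
      "bound_factor a (g * real r / real (k (Suc i))) \<le> Y"
      "Y * D (Suc i) \<le> (\<Sum>t\<in>{Suc i..<s}. rho t)"
      using Suc i by auto
    have "r + 1 \<le> k i" using card_le[of i] i by (auto simp: k_def i_def)
    moreover have "g * D i \<le> real (k i) * rho i" using gain[OF i(1)] by (simp add: k_def D_def)
    moreover have "D (Suc i) = D i - (if inside i then 1 else a) * rho i" by (simp add: D_def)
    ultimately obtain Y' where "Y' \<le> real (Suc r) / real (k i)"
      "bound_factor a (g * real (Suc r) / real (k i)) \<le> Y'" "Y' * D i \<le> rho i + (\<Sum>t\<in>{Suc i..<s}. rho t)"
      using greedy_backward_step[OF a g] Y unfolding k_Suc by metis
    moreover have "s - Suc r = i" by (simp add: i_def)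
    ultimately show ?case using sum.atLeast_Suc_lessThan[OF i(1), of rho] by auto
  qed
  from backward[of s] obtain Y where
    "bound_factor a (g * real s / real (k 0)) \<le> Y" "Y * D 0 \<le> (\<Sum>t\<in>{0..<s}. rho t)"
    by auto
  moreover have "k 0 = s" "D 0 = F" by (simp_all add: k_def D_def)
  ultimately have "bound_factor a g \<le> Y" "Y * F \<le> (\<Sum>t<s. rho t)"
    using \<open>0 < s\<close> by (simp_all add: atLeast0LessThan)
  then show ?thesis using \<open>0 \<le> F\<close> by (meson mult_right_mono order_trans)
qed

definition weakly_submodular :: "(nat set \<Rightarrow> real) \<Rightarrow> nat set \<Rightarrow> real \<Rightarrow> bool" where
  "weakly_submodular f I g \<longleftrightarrow> (\<forall>Om S. Om \<subseteq> I \<longrightarrow> S \<subseteq> I \<longrightarrow>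
     g * marg f Om S \<le> (\<Sum>w\<in>Om - S. marg f {w} S))"

definition bounded_curvature :: "(nat set \<Rightarrow> real) \<Rightarrow> nat set \<Rightarrow> real \<Rightarrow> bool" where
  "bounded_curvature f I a \<longleftrightarrow> (\<forall>Om S j. Om \<subseteq> I \<longrightarrow> S \<subseteq> I \<longrightarrow> j \<in> S - Om \<longrightarrow>
     (1 - a) * marg f {j} (S - {j}) \<le> marg f {j} ((S - {j}) \<union> Om))"

lemma marg_nonneg:
  assumes mono: "\<And>S X. S \<subseteq> I \<Longrightarrow> X \<subseteq> I \<Longrightarrow> f S \<le> f (S \<union> X)"
    and "Om \<subseteq> I" "S \<subseteq> I"
  shows "0 \<le> marg f Om S"
  using mono[OF assms(3,2)] by (simp add: marg_def)

lemma subm_ratio_greatest: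
  assumes mono: "\<And>S X. S \<subseteq> I \<Longrightarrow> X \<subseteq> I \<Longrightarrow> f S \<le> f (S \<union> X)"
  shows "subm_ratio f I \<in> {0..1}" "weakly_submodular f I (subm_ratio f I)"
    and "\<And>g. g \<in> {0..1} \<Longrightarrow> weakly_submodular f I g \<Longrightarrow> g \<le> subm_ratio f I"
proof -
  define P where "P = {g. g \<in> {0..1} \<and> weakly_submodular f I g}"
  have gains_nonneg: "0 \<le> (\<Sum>w\<in>Om - S. marg f {w} S)" if "Om \<subseteq> I" "S \<subseteq> I" for Om S
    using that by (intro sum_nonneg marg_nonneg[OF mono]) auto
  have "0 \<in> P" using gains_nonneg by (simp add: P_def weakly_submodular_def)
  have bdd: "bdd_above P" by (rule bdd_aboveI[of _ 1]) (auto simp: P_def)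
  define g0 where "g0 = Sup P"
  have upper: "g \<le> g0" if "g \<in> P" for g using cSup_upper[OF that bdd] by (simp add: g0_def)
  have "g0 \<le> 1" unfolding g0_def
  proof (rule cSup_least)
    show "P \<noteq> {}" using \<open>0 \<in> P\<close> by blast
  qed (simp add: P_def)
  \<comment> \<open>the defining inequalities are closed under suprema\<close>
  have "weakly_submodular f I g0" unfolding weakly_submodular_def
  proof (intro allI impI)
    fix Om S assume h: "Om \<subseteq> I" "S \<subseteq> I"
    show "g0 * marg f Om S \<le> (\<Sum>w\<in>Om - S. marg f {w} S)"
    proof (cases "marg f Om S = 0")
      case False
      then have pos: "marg f Om S > 0" using marg_nonneg[OF mono h] by auto
      have "g0 \<le> (\<Sum>w\<in>Om - S. marg f {w} S) / marg f Om S"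
        unfolding g0_def
      proof (rule cSup_least)
        show "P \<noteq> {}" using \<open>0 \<in> P\<close> by blast
      qed (use h pos in \<open>auto simp: P_def weakly_submodular_def le_divide_eq\<close>)
      then show ?thesis using pos by (simp add: le_divide_eq)
    qed (use gains_nonneg[OF h] in simp)
  qed
  then have "g0 \<in> P" using upper[OF \<open>0 \<in> P\<close>] \<open>g0 \<le> 1\<close> by (simp add: P_def)
  then have "subm_ratio f I = g0"
    unfolding subm_ratio_def weakly_submodular_def[symmetric]
    by (intro Greatest_equality) (use upper in \<open>auto simp: P_def\<close>)
  then show "subm_ratio f I \<in> {0..1}" "weakly_submodular f I (subm_ratio f I)"
    and "\<And>g. g \<in> {0..1} \<Longrightarrow> weakly_submodular f I g \<Longrightarrow> g \<le> subm_ratio f I"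
    using \<open>g0 \<in> P\<close> upper by (auto simp: P_def)
qed

lemma curvature_least:
  assumes mono: "\<And>S X. S \<subseteq> I \<Longrightarrow> X \<subseteq> I \<Longrightarrow> f S \<le> f (S \<union> X)"
  shows "curvature f I \<in> {0..1}" "bounded_curvature f I (curvature f I)"
    and "\<And>a. a \<in> {0..1} \<Longrightarrow> bounded_curvature f I a \<Longrightarrow> curvature f I \<le> a"
proof -
  define P where "P = {a. a \<in> {0..1} \<and> bounded_curvature f I a}"
  have marg_j: "0 \<le> marg f {j} T" if "j \<in> I" "T \<subseteq> I" for j T
    using that by (intro marg_nonneg[OF mono]) auto
  have "1 \<in> P" by (auto simp: P_def bounded_curvature_def intro!: marg_j)
  have bdd: "bdd_below P" by (rule bdd_belowI[of _ 0]) (auto simp: P_def)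
  define a0 where "a0 = Inf P"
  have lower: "a0 \<le> a" if "a \<in> P" for a using cInf_lower[OF that bdd] by (simp add: a0_def)
  have "0 \<le> a0" unfolding a0_def
  proof (rule cInf_greatest)
    show "P \<noteq> {}" using \<open>1 \<in> P\<close> by blast
  qed (simp add: P_def)
  have "bounded_curvature f I a0" unfolding bounded_curvature_def
  proof (intro allI impI)
    fix Om S j assume h: "Om \<subseteq> I" "S \<subseteq> I" "j \<in> S - Om"
    then have hj: "j \<in> I" "S - {j} \<subseteq> I" "(S - {j}) \<union> Om \<subseteq> I" by auto
    show "(1 - a0) * marg f {j} (S - {j}) \<le> marg f {j} ((S - {j}) \<union> Om)"
    proof (cases "marg f {j} (S - {j}) = 0")
      case False
      then have pos: "marg f {j} (S - {j}) > 0" using marg_j[OF hj(1,2)] by auto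
      have "1 - marg f {j} ((S - {j}) \<union> Om) / marg f {j} (S - {j}) \<le> a0"
        unfolding a0_def using \<open>1 \<in> P\<close>
      proof (intro cInf_greatest)
        fix a assume "a \<in> P"
        then have "(1 - a) * marg f {j} (S - {j}) \<le> marg f {j} ((S - {j}) \<union> Om)"
          using h by (auto simp: P_def bounded_curvature_def)
        then have "1 - a \<le> marg f {j} ((S - {j}) \<union> Om) / marg f {j} (S - {j})"
          using pos by (simp add: le_divide_eq)
        then show "1 - marg f {j} ((S - {j}) \<union> Om) / marg f {j} (S - {j}) \<le> a"
          by linarith
      qed auto
      then have "1 - a0 \<le> marg f {j} ((S - {j}) \<union> Om) / marg f {j} (S - {j})" by linarith
      then show ?thesis using pos by (simp add: le_divide_eq)
    qed (use marg_j[OF hj(1,3)] in simp)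
  qed
  then have "a0 \<in> P" using lower[OF \<open>1 \<in> P\<close>] \<open>0 \<le> a0\<close> by (simp add: P_def)
  then have "curvature f I = a0"
    unfolding curvature_def bounded_curvature_def[symmetric]
    by (intro Least_equality) (use lower in \<open>auto simp: P_def\<close>)
  then show "curvature f I \<in> {0..1}" "bounded_curvature f I (curvature f I)"
    and "\<And>a. a \<in> {0..1} \<Longrightarrow> bounded_curvature f I a \<Longrightarrow> curvature f I \<le> a"
    using \<open>a0 \<in> P\<close> lower by (auto simp: P_def)
qed

lemma greedy_outputE:
  assumes "greedy_output f I s Sg"
  obtains Sq :: "nat \<Rightarrow> nat set" and w :: "nat \<Rightarrow> nat"
  where "Sq 0 = {}" "Sg = Sq s"
    and "\<And>i. i < s \<Longrightarrow> w i \<in> I - Sq i \<and> Sq (Suc i) = insert (w i) (Sq i)"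
    and "\<And>i x. i < s \<Longrightarrow> x \<in> I - Sq i \<Longrightarrow> f (insert x (Sq i)) \<le> f (Sq (Suc i))"
proof -
  obtain Sq where Sq: "Sq 0 = {}" "Sg = Sq s"
    and step: "\<forall>i<s. \<exists>w \<in> I - Sq i. Sq (Suc i) = insert w (Sq i) \<and>
        (\<forall>w' \<in> I - Sq i. f (insert w' (Sq i)) - f (Sq i) \<le> f (Sq (Suc i)) - f (Sq i))"
    using assms unfolding greedy_output_def by blast
  then obtain w where "\<forall>i<s. w i \<in> I - Sq i \<and> Sq (Suc i) = insert (w i) (Sq i)"
    by metis
  with Sq step show ?thesis by (intro that) auto
qed

lemma greedy_run_curvature:
  fixes f :: "nat set \<Rightarrow> real" and Sq :: "nat \<Rightarrow> nat set" and w :: "nat \<Rightarrow> nat"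
  assumes bc: "bounded_curvature f I a" and Om: "Om \<subseteq> I" and "Sq 0 = {}"
    and step: "\<And>i. i < t \<Longrightarrow> w i \<notin> Sq i \<and> Sq (Suc i) = insert (w i) (Sq i)"
    and Sq_I: "\<And>i. i \<le> t \<Longrightarrow> Sq i \<subseteq> I"
  shows "f Om + (1 - a) * (\<Sum>i<t. if w i \<in> Om then 0 else f (Sq (Suc i)) - f (Sq i)) \<le> f (Sq t \<union> Om)"
  using step Sq_I
proof (induction t)
  case (Suc t)
  then have IH: "f Om + (1 - a) * (\<Sum>i<t. if w i \<in> Om then 0 else f (Sq (Suc i)) - f (Sq i)) \<le> f (Sq t \<union> Om)"
    by simp
  have t: "w t \<notin> Sq t" "Sq (Suc t) = insert (w t) (Sq t)" using Suc.prems(1) by auto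
  show ?case
  proof (cases "w t \<in> Om")
    case True
    then have "Sq (Suc t) \<union> Om = Sq t \<union> Om" using t by auto
    then show ?thesis using IH True by simp
  next
    case False
    then have "w t \<in> Sq (Suc t) - Om" "Sq (Suc t) - {w t} = Sq t" using t by auto
    moreover have "Sq (Suc t) \<subseteq> I" using Suc.prems(2) by simp
    ultimately have "(1 - a) * marg f {w t} (Sq t) \<le> marg f {w t} (Sq t \<union> Om)"
      using bc[unfolded bounded_curvature_def, rule_format, OF Om] by metis
    then show ?thesis using IH False t by (simp add: marg_def algebra_simps)
  qed
qed (simp add: \<open>Sq 0 = {}\<close>)

lemma card_Diff_image_le:
  assumes "inj_on w {..<t}" "finite Om" "card Om \<le> s"
  shows "card (Om - w ` {..<t}) \<le> s - card {i. i < t \<and> w i \<in> Om}"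
proof -
  have "Om \<inter> w ` {..<t} = w ` {i. i < t \<and> w i \<in> Om}" by auto
  moreover have "inj_on w {i. i < t \<and> w i \<in> Om}" by (rule inj_on_subset[OF assms(1)]) auto
  ultimately have "card (Om \<inter> w ` {..<t}) = card {i. i < t \<and> w i \<in> Om}" by (simp add: card_image)
  then show ?thesis using assms(2,3) by (simp add: card_Diff_subset_Int)
qed

lemma greedy_output_guarantee:
  fixes f :: "nat set \<Rightarrow> real"
  assumes "finite I" and "f {} = 0" and mono: "\<And>S X. S \<subseteq> I \<Longrightarrow> X \<subseteq> I \<Longrightarrow> f S \<le> f (S \<union> X)"
    and a: "0 \<le> a" "a \<le> 1" and g: "0 \<le> g" "g \<le> 1"
    and ws: "weakly_submodular f I g" and bc: "bounded_curvature f I a"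
    and Om: "Om \<subseteq> I" "card Om \<le> s" and "0 < s" and "greedy_output f I s Sg"
  shows "bound_factor a g * f Om \<le> f Sg"
proof -
  obtain Sq w where Sq0: "Sq 0 = {}" and Sg: "Sg = Sq s"
    and step: "\<And>i. i < s \<Longrightarrow> w i \<in> I - Sq i \<and> Sq (Suc i) = insert (w i) (Sq i)"
    and greedy: "\<And>i x. i < s \<Longrightarrow> x \<in> I - Sq i \<Longrightarrow> f (insert x (Sq i)) \<le> f (Sq (Suc i))"
    using greedy_outputE[OF \<open>greedy_output f I s Sg\<close>] by blast
  have Sq_image: "Sq t = w ` {..<t}" if "t \<le> s" for t
    using that by (induction t) (auto simp: Sq0 step lessThan_Suc)
  have Sq_I: "Sq t \<subseteq> I" if "t \<le> s" for t
    using Sq_image[OF that] step that by fastforce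
  have "inj_on w {..<s}"
  proof (rule linorder_inj_onI)
    fix i j assume "i < j" "j \<in> {..<s}"
    then have "w i \<in> Sq j" "w j \<notin> Sq j" using Sq_image[of j] step[of j] by auto
    then show "w i \<noteq> w j" by auto
  qed auto
  define rho where "rho t = f (Sq (Suc t)) - f (Sq t)" for t
  have f_Sq: "f (Sq t) = (\<Sum>i<t. rho i)" for t
    using sum_lessThan_telescope[of "\<lambda>i. f (Sq i)" t] by (simp add: rho_def Sq0 \<open>f {} = 0\<close>)
  have gain: "g * (f Om - (\<Sum>i<t. (if w i \<in> Om then 1 else a) * rho i))
      \<le> real (s - card {i. i < t \<and> w i \<in> Om}) * rho t" if "t < s" for t
  proof -
    have "(\<Sum>i<t. (if w i \<in> Om then 1 else a) * rho i)
        = (\<Sum>i<t. rho i) - (1 - a) * (\<Sum>i<t. if w i \<in> Om then 0 else rho i)"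
      unfolding sum_distrib_left sum_subtractf[symmetric] by (rule sum.cong) (auto simp: algebra_simps)
    moreover have "f Om + (1 - a) * (\<Sum>i<t. if w i \<in> Om then 0 else rho i) \<le> f (Sq t \<union> Om)"
      unfolding rho_def by (rule greedy_run_curvature[where Sq = Sq, OF bc Om(1) Sq0]) (use step Sq_I that in auto)
    ultimately have "f Om - (\<Sum>i<t. (if w i \<in> Om then 1 else a) * rho i) \<le> marg f Om (Sq t)"
      using f_Sq[of t] by (simp add: marg_def)
    then have "g * (f Om - (\<Sum>i<t. (if w i \<in> Om then 1 else a) * rho i)) \<le> g * marg f Om (Sq t)"
      using g by (simp add: mult_left_mono)
    also have "\<dots> \<le> (\<Sum>x\<in>Om - Sq t. marg f {x} (Sq t))"
      using ws Om(1) Sq_I[of t] that by (simp add: weakly_submodular_def)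
    also have "\<dots> \<le> real (card (Om - Sq t)) * rho t"
      using greedy[OF that] Om(1) by (intro sum_bounded_above) (auto simp: marg_def rho_def)
    also have "\<dots> \<le> real (s - card {i. i < t \<and> w i \<in> Om}) * rho t"
    proof (rule mult_right_mono)
      show "real (card (Om - Sq t)) \<le> real (s - card {i. i < t \<and> w i \<in> Om})"
        using card_Diff_image_le[OF inj_on_subset[OF \<open>inj_on w {..<s}\<close>] finite_subset[OF Om(1) \<open>finite I\<close>] Om(2)]
          Sq_image that by simp
      show "0 \<le> rho t"
        using mono[of "Sq t" "{w t}"] Sq_I[of t] step[OF that] that by (simp add: rho_def)
    qed
    finally show ?thesis .
  qed
  have "0 \<le> f Om" using mono[of "{}" Om] Om(1) \<open>f {} = 0\<close> by simp
  from greedy_gains_lower_bound[OF a g \<open>0 < s\<close> this gain]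
  show ?thesis by (simp add: Sg f_Sq)
qed

section \<open>Quadratic forms and extreme eigenvalues\<close>

definition pos_semidef :: "nat \<Rightarrow> real mat \<Rightarrow> bool" where
  "pos_semidef N A \<longleftrightarrow> (\<forall>x \<in> carrier_vec N. 0 \<le> x \<bullet> (A *\<^sub>v x))"

definition pos_def :: "nat \<Rightarrow> real mat \<Rightarrow> bool" where
  "pos_def N A \<longleftrightarrow> (\<forall>x \<in> carrier_vec N. x \<noteq> 0\<^sub>v N \<longrightarrow> 0 < x \<bullet> (A *\<^sub>v x))"

lemma scalar_prod_sum_lessThan:
  assumes "x \<in> carrier_vec N" "y \<in> carrier_vec N"
  shows "x \<bullet> y = (\<Sum>i<N. x $ i * y $ i)"
  using assms by (simp add: scalar_prod_def lessThan_atLeast0)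

lemma scalar_prod_self_nonneg: "0 \<le> (x :: real vec) \<bullet> x"
  by (simp add: scalar_prod_def sum_nonneg)

lemma scalar_prod_self_eq_0:
  fixes x :: "real vec"
  assumes x: "x \<in> carrier_vec N" and "x \<bullet> x = 0"
  shows "x = 0\<^sub>v N"
proof (rule eq_vecI)
  have "(\<Sum>j<N. x $ j * x $ j) = 0" using assms by (simp add: scalar_prod_sum_lessThan[OF x x])
  then have "\<forall>j\<in>{..<N}. x $ j * x $ j = 0" by (subst sum_nonneg_eq_0_iff[symmetric]) auto
  then show "x $ i = 0\<^sub>v N $ i" if "i < dim_vec (0\<^sub>v N)" for i using that by auto
qed (use x in auto)

lemma pos_def_imp_pos_semidef:
  assumes "A \<in> carrier_mat N N" "pos_def N A"
  shows "pos_semidef N A"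
  using assms unfolding pos_def_def pos_semidef_def
  by (metis order.strict_implies_order order.refl scalar_prod_left_zero mult_mat_vec_carrier)

lemma pos_semidef_one: "pos_semidef N (1\<^sub>m N)"
  by (simp add: pos_semidef_def scalar_prod_self_nonneg)

lemma quad_form_sym:
  fixes A :: "real mat"
  assumes A: "A \<in> carrier_mat N N" "transpose_mat A = A"
    and u: "u \<in> carrier_vec N" and v: "v \<in> carrier_vec N"
  shows "u \<bullet> (A *\<^sub>v v) = v \<bullet> (A *\<^sub>v u)"
proof -
  have "u \<bullet> (A *\<^sub>v v) = (transpose_mat A *\<^sub>v u) \<bullet> v"
    using transpose_vec_mult_scalar[OF A(1) v u] by simp
  also have "\<dots> = v \<bullet> (A *\<^sub>v u)" using A u v by (simp add: comm_scalar_prod[of _ N])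
  finally show ?thesis .
qed

lemma smult_mat_mult_vec:
  fixes A :: "real mat"
  assumes "A \<in> carrier_mat N M" "v \<in> carrier_vec M"
  shows "(k \<cdot>\<^sub>m A) *\<^sub>v v = k \<cdot>\<^sub>v (A *\<^sub>v v)"
  using assms by (intro eq_vecI) (auto simp: scalar_prod_def sum_distrib_left algebra_simps)

lemma quad_form_add_mat:
  fixes M B :: "real mat"
  assumes "M \<in> carrier_mat N N" "B \<in> carrier_mat N N" "u \<in> carrier_vec N" "v \<in> carrier_vec N"
  shows "u \<bullet> ((M + B) *\<^sub>v v) = u \<bullet> (M *\<^sub>v v) + u \<bullet> (B *\<^sub>v v)"
  using assms by (simp add: add_mult_distrib_mat_vec scalar_prod_add_distrib[of _ N])

lemma quad_form_diff:
  fixes A :: "real mat"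
  assumes A: "A \<in> carrier_mat N N" "transpose_mat A = A"
    and u: "u \<in> carrier_vec N" and v: "v \<in> carrier_vec N"
  shows "(u - t \<cdot>\<^sub>v v) \<bullet> (A *\<^sub>v (u - t \<cdot>\<^sub>v v)) =
    u \<bullet> (A *\<^sub>v u) - 2 * t * (v \<bullet> (A *\<^sub>v u)) + t\<^sup>2 * (v \<bullet> (A *\<^sub>v v))"
proof -
  have "A *\<^sub>v (u - t \<cdot>\<^sub>v v) = A *\<^sub>v u - t \<cdot>\<^sub>v (A *\<^sub>v v)"
    using A u v by (simp add: mult_minus_distrib_mat_vec mult_mat_vec)
  then have "(u - t \<cdot>\<^sub>v v) \<bullet> (A *\<^sub>v (u - t \<cdot>\<^sub>v v)) =
      u \<bullet> (A *\<^sub>v u) - t * (u \<bullet> (A *\<^sub>v v)) - t * (v \<bullet> (A *\<^sub>v u)) + t * t * (v \<bullet> (A *\<^sub>v v))"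
    using A u v
    by (simp add: minus_scalar_prod_distrib[of _ N] scalar_prod_minus_distrib[of _ N] algebra_simps)
  then show ?thesis using quad_form_sym[OF A u v] by (simp add: power2_eq_square algebra_simps)
qed

lemma quad_form_minus:
  fixes A :: "real mat"
  assumes "A \<in> carrier_mat N N" "transpose_mat A = A" "u \<in> carrier_vec N" "v \<in> carrier_vec N"
  shows "(u - v) \<bullet> (A *\<^sub>v (u - v)) = u \<bullet> (A *\<^sub>v u) - 2 * (v \<bullet> (A *\<^sub>v u)) + v \<bullet> (A *\<^sub>v v)"
  using quad_form_diff[OF assms, of 1] by simp

lemma quadratic_nonneg_imp_discriminant:
  fixes a b c :: real
  assumes "0 \<le> c" and nonneg: "\<And>t. 0 \<le> a - 2 * t * b + t\<^sup>2 * c"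
  shows "b\<^sup>2 \<le> a * c"
proof (cases "c = 0")
  case True
  have "b = 0"
  proof (rule ccontr)
    assume "b \<noteq> 0"
    then have "a - 2 * ((a + 1) / (2 * b)) * b + ((a + 1) / (2 * b))\<^sup>2 * c < 0"
      using True by simp
    then show False using nonneg[of "(a + 1) / (2 * b)"] by simp
  qed
  then show ?thesis using True by simp
next
  case False
  then have "c > 0" using assms(1) by simp
  have "0 \<le> a - 2 * (b / c) * b + (b / c)\<^sup>2 * c" by (rule nonneg)
  also have "\<dots> = a - b\<^sup>2 / c" using \<open>c > 0\<close> by (simp add: power2_eq_square field_simps)
  finally show ?thesis using \<open>c > 0\<close> by (simp add: field_simps)
qed

lemma pos_semidef_cauchy_schwarz:
  fixes B :: "real mat"
  assumes B: "B \<in> carrier_mat N N" "transpose_mat B = B" "pos_semidef N B"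
    and u: "u \<in> carrier_vec N" and v: "v \<in> carrier_vec N"
  shows "(u \<bullet> (B *\<^sub>v v))\<^sup>2 \<le> (u \<bullet> (B *\<^sub>v u)) * (v \<bullet> (B *\<^sub>v v))"
proof -
  have "u \<bullet> (B *\<^sub>v v) = v \<bullet> (B *\<^sub>v u)" by (rule quad_form_sym[OF B(1,2) u v])
  moreover have "0 \<le> u \<bullet> (B *\<^sub>v u) - 2 * t * (v \<bullet> (B *\<^sub>v u)) + t\<^sup>2 * (v \<bullet> (B *\<^sub>v v))" for t
  proof -
    have "u - t \<cdot>\<^sub>v v \<in> carrier_vec N" using u v by simp
    then have "0 \<le> (u - t \<cdot>\<^sub>v v) \<bullet> (B *\<^sub>v (u - t \<cdot>\<^sub>v v))"
      using B(3) by (simp add: pos_semidef_def)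
    then show ?thesis using quad_form_diff[OF B(1,2) u v, of t] by simp
  qed
  moreover have "0 \<le> v \<bullet> (B *\<^sub>v v)" using B(3) v by (simp add: pos_semidef_def)
  ultimately show ?thesis using quadratic_nonneg_imp_discriminant by metis
qed

lemma pos_semidef_kernel:
  fixes B :: "real mat"
  assumes B: "B \<in> carrier_mat N N" "transpose_mat B = B" "pos_semidef N B"
    and x: "x \<in> carrier_vec N" and "x \<bullet> (B *\<^sub>v x) = 0"
  shows "B *\<^sub>v x = 0\<^sub>v N"
proof -
  have Bx: "B *\<^sub>v x \<in> carrier_vec N" using B x by simp
  have "((B *\<^sub>v x) \<bullet> (B *\<^sub>v x))\<^sup>2 \<le> 0"
    using pos_semidef_cauchy_schwarz[OF B Bx x] assms(5) by simp
  then show ?thesis using scalar_prod_self_eq_0[OF Bx] by simp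
qed

text \<open>The unit sphere of \<open>\<real>\<^sup>N\<close>, as functions vanishing from \<open>N\<close> on, so that compactness
  can be taken from the product topology.\<close>

definition unit_sphere_fun :: "nat \<Rightarrow> (nat \<Rightarrow> real) set" where
  "unit_sphere_fun N = {g. (\<forall>i. g i \<in> (if i < N then {-1..1} else {0})) \<and> (\<Sum>i<N. (g i)\<^sup>2) = 1}"

lemma compact_unit_sphere_fun: "compact (unit_sphere_fun N)"
proof -
  define C where "C i = (if i < N then {-1..1::real} else {0})" for i :: nat
  have "compactin (product_topology (\<lambda>_. euclidean) UNIV) (PiE UNIV C)"
    by (subst compactin_PiE) (auto simp: C_def)
  moreover have "PiE UNIV C = {g. \<forall>i. g i \<in> C i}" by (auto simp: PiE_def Pi_def)
  ultimately have "compact {g. \<forall>i. g i \<in> C i}" by (simp add: euclidean_product_topology)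
  moreover have "closed {g :: nat \<Rightarrow> real. (\<Sum>i<N. (g i)\<^sup>2) = 1}"
    by (intro closed_Collect_eq continuous_intros continuous_on_product_then_coordinatewise continuous_on_id)
  ultimately have "compact ({g. \<forall>i. g i \<in> C i} \<inter> {g. (\<Sum>i<N. (g i)\<^sup>2) = 1})"
    by (rule compact_Int_closed)
  then show ?thesis by (simp add: unit_sphere_fun_def C_def Collect_conj_eq)
qed

lemma normalized_vec_in_unit_sphere_fun:
  fixes x :: "real vec"
  assumes x: "x \<in> carrier_vec N" and pos: "0 < x \<bullet> x"
  shows "(\<lambda>i. if i < N then x $ i / sqrt (x \<bullet> x) else 0) \<in> unit_sphere_fun N"
proof -
  define t where "t = sqrt (x \<bullet> x)"
  have t: "t > 0" "t\<^sup>2 = x \<bullet> x" using pos by (simp_all add: t_def)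
  have sq: "(\<Sum>i<N. (x $ i)\<^sup>2) = t\<^sup>2" using t(2) x by (simp add: scalar_prod_sum_lessThan power2_eq_square)
  have "x $ i / t \<in> {-1..1}" if "i < N" for i
  proof -
    have "(x $ i)\<^sup>2 \<le> t\<^sup>2" using that sq member_le_sum[of i "{..<N}" "\<lambda>j. (x $ j)\<^sup>2"] by simp
    then have "\<bar>x $ i\<bar> \<le> t" using abs_le_square_iff[of "x $ i" t] t(1) by simp
    then show ?thesis using t(1) by (simp add: abs_le_iff divide_le_eq_1 le_divide_eq)
  qed
  moreover have "(\<Sum>i<N. (if i < N then x $ i / t else 0)\<^sup>2) = 1"
    using sq t pos by (simp add: power_divide sum_divide_distrib[symmetric])
  ultimately show ?thesis by (simp add: unit_sphere_fun_def t_def[symmetric])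
qed

lemma quad_form_max_on_sphere:
  fixes A :: "real mat"
  assumes A: "A \<in> carrier_mat N N" and "0 < N"
  obtains x0 :: "real vec" where "x0 \<in> carrier_vec N" "x0 \<bullet> x0 = 1"
    "\<And>x. x \<in> carrier_vec N \<Longrightarrow> x \<bullet> (A *\<^sub>v x) \<le> (x0 \<bullet> (A *\<^sub>v x0)) * (x \<bullet> x)"
proof -
  define Q where "Q g = (\<Sum>i<N. \<Sum>j<N. A $$ (i, j) * g i * g j)" for g :: "nat \<Rightarrow> real"
  have Q_vec: "x \<bullet> (A *\<^sub>v x) = Q (\<lambda>i. x $ i)" if "x \<in> carrier_vec N" for x
    using A that
    by (simp add: Q_def scalar_prod_sum_lessThan[of _ N] row_def sum_distrib_left algebra_simps)
  have "(\<lambda>i. if i = 0 then 1 else 0) \<in> unit_sphere_fun N" using \<open>0 < N\<close>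
    by (auto simp: unit_sphere_fun_def if_distrib[of "\<lambda>x. x\<^sup>2"] cong: if_cong)
  moreover have "continuous_on (unit_sphere_fun N) Q" unfolding Q_def
    by (intro continuous_intros continuous_on_product_then_coordinatewise continuous_on_id)
  ultimately obtain g where g: "g \<in> unit_sphere_fun N" and gmax: "\<And>h. h \<in> unit_sphere_fun N \<Longrightarrow> Q h \<le> Q g"
    using continuous_attains_sup[OF compact_unit_sphere_fun] by blast
  define x0 where "x0 = vec N g"
  have x0: "x0 \<in> carrier_vec N" by (simp add: x0_def)
  have "x0 \<bullet> x0 = 1"
    using g by (simp add: x0_def unit_sphere_fun_def scalar_prod_sum_lessThan[of _ N] power2_eq_square)
  moreover have "x \<bullet> (A *\<^sub>v x) \<le> (x0 \<bullet> (A *\<^sub>v x0)) * (x \<bullet> x)" if x: "x \<in> carrier_vec N" for x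
  proof (cases "x \<bullet> x = 0")
    case True
    then show ?thesis using scalar_prod_self_eq_0[OF x] A by simp
  next
    case False
    then have pos: "0 < x \<bullet> x" using scalar_prod_self_nonneg[of x] by linarith
    define t where "t = sqrt (x \<bullet> x)"
    define h where "h = (\<lambda>i. if i < N then x $ i / t else 0)"
    have "t > 0" "t\<^sup>2 = x \<bullet> x" using pos by (simp_all add: t_def)
    have "x \<bullet> (A *\<^sub>v x) = t\<^sup>2 * Q h"
      using Q_vec[OF x] \<open>t > 0\<close> by (simp add: Q_def h_def power2_eq_square flip: sum_divide_distrib)
    also have "\<dots> \<le> t\<^sup>2 * Q g"
    proof -
      have "h \<in> unit_sphere_fun N"
        using normalized_vec_in_unit_sphere_fun[OF x pos] unfolding h_def t_def .
      then show ?thesis using gmax by (simp add: mult_left_mono)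
    qed
    also have "Q g = x0 \<bullet> (A *\<^sub>v x0)" using Q_vec[OF x0] by (simp add: x0_def Q_def)
    finally show ?thesis using \<open>t\<^sup>2 = x \<bullet> x\<close> by (simp add: mult.commute)
  qed
  ultimately show ?thesis using x0 that by blast
qed

lemma eigenvalue_rayleigh_max:
  fixes A :: "real mat"
  assumes A: "A \<in> carrier_mat N N" "transpose_mat A = A" and "0 < N"
  obtains k where "eigenvalue A k" "\<And>x. x \<in> carrier_vec N \<Longrightarrow> x \<bullet> (A *\<^sub>v x) \<le> k * (x \<bullet> x)"
proof -
  obtain x0 :: "real vec" where x0: "x0 \<in> carrier_vec N" "x0 \<bullet> x0 = 1"
    and max: "\<And>x. x \<in> carrier_vec N \<Longrightarrow> x \<bullet> (A *\<^sub>v x) \<le> (x0 \<bullet> (A *\<^sub>v x0)) * (x \<bullet> x)"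
    using quad_form_max_on_sphere[OF A(1) \<open>0 < N\<close>] by blast
  define k where "k = x0 \<bullet> (A *\<^sub>v x0)"
  define B where "B = k \<cdot>\<^sub>m 1\<^sub>m N - A"
  have A_sym: "A $$ (j, i) = A $$ (i, j)" if "i < N" "j < N" for i j
    using arg_cong[OF A(2), of "\<lambda>M. M $$ (i, j)"] A(1) that by simp
  have B: "B \<in> carrier_mat N N" "transpose_mat B = B"
    using A A_sym by (auto simp: B_def intro!: eq_matI)
  have Bx: "B *\<^sub>v x = k \<cdot>\<^sub>v x - A *\<^sub>v x" if "x \<in> carrier_vec N" for x
    using A that by (simp add: B_def minus_mult_distrib_mat_vec[of _ N N] smult_mat_mult_vec[of _ N N])
  have quad_B: "x \<bullet> (B *\<^sub>v x) = k * (x \<bullet> x) - x \<bullet> (A *\<^sub>v x)" if "x \<in> carrier_vec N" for x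
    using A that by (simp add: Bx scalar_prod_minus_distrib[of _ N])
  have "pos_semidef N B" using max quad_B by (simp add: pos_semidef_def k_def)
  moreover have "x0 \<bullet> (B *\<^sub>v x0) = 0" using quad_B[OF x0(1)] x0(2) by (simp add: k_def)
  ultimately have kernel: "k \<cdot>\<^sub>v x0 - A *\<^sub>v x0 = 0\<^sub>v N" using pos_semidef_kernel[OF B _ x0(1)] Bx[OF x0(1)] by simp
  then have "(A *\<^sub>v x0) $ i = k * x0 $ i" if "i < N" for i
  proof -
    have "(k \<cdot>\<^sub>v x0 - A *\<^sub>v x0) $ i = 0" using kernel that by simp
    then show ?thesis using A x0(1) that by simp
  qed
  then have "A *\<^sub>v x0 = k \<cdot>\<^sub>v x0" using A x0(1) by (intro eq_vecI) auto
  moreover have "x0 \<noteq> 0\<^sub>v N" using x0(2) by auto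
  ultimately have "eigenvalue A k" using A x0(1) by (auto simp: eigenvalue_def eigenvector_def)
  then show ?thesis using that max by (simp add: k_def)
qed

lemma eigenvalues_finite:
  fixes A :: "real mat"
  assumes "A \<in> carrier_mat N N"
  shows "finite {k. eigenvalue A k}"
proof -
  have "char_poly A \<noteq> 0" using degree_monic_char_poly[OF assms] by auto
  then show ?thesis using eigenvalue_root_char_poly[OF assms] poly_roots_finite by simp
qed

lemma lambda_max_rayleigh:
  fixes A :: "real mat"
  assumes A: "A \<in> carrier_mat N N" "transpose_mat A = A" and "0 < N"
  shows "eigenvalue A (lambda_max A)"
    and "\<And>x. x \<in> carrier_vec N \<Longrightarrow> x \<bullet> (A *\<^sub>v x) \<le> lambda_max A * (x \<bullet> x)"
proof -
  obtain k where k: "eigenvalue A k" "\<And>x. x \<in> carrier_vec N \<Longrightarrow> x \<bullet> (A *\<^sub>v x) \<le> k * (x \<bullet> x)"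
    using eigenvalue_rayleigh_max[OF A \<open>0 < N\<close>] by blast
  have fin: "finite {k. eigenvalue A k}" by (rule eigenvalues_finite[OF A(1)])
  then show "eigenvalue A (lambda_max A)" using Max_in[OF fin] k(1) by (auto simp: lambda_max_def)
  have "k \<le> lambda_max A" unfolding lambda_max_def using fin k(1) by simp
  then show "x \<bullet> (A *\<^sub>v x) \<le> lambda_max A * (x \<bullet> x)" if "x \<in> carrier_vec N" for x
    using k(2)[OF that] mult_right_mono[OF _ scalar_prod_self_nonneg, of k "lambda_max A" x] by simp
qed

lemma lambda_min_rayleigh:
  fixes A :: "real mat"
  assumes A: "A \<in> carrier_mat N N" "transpose_mat A = A" and "0 < N"
  shows "eigenvalue A (lambda_min A)"
    and "\<And>x. x \<in> carrier_vec N \<Longrightarrow> lambda_min A * (x \<bullet> x) \<le> x \<bullet> (A *\<^sub>v x)"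
proof -
  have "- A \<in> carrier_mat N N" "transpose_mat (- A) = - A" using A by (auto simp: transpose_uminus)
  then obtain k where k: "eigenvalue (- A) k"
    and le: "\<And>x. x \<in> carrier_vec N \<Longrightarrow> x \<bullet> (- A *\<^sub>v x) \<le> k * (x \<bullet> x)"
    using eigenvalue_rayleigh_max[OF _ _ \<open>0 < N\<close>] by blast
  from k obtain v where v: "v \<in> carrier_vec N" "v \<noteq> 0\<^sub>v N" "- A *\<^sub>v v = k \<cdot>\<^sub>v v"
    using A by (auto simp: eigenvalue_def eigenvector_def)
  have "(A *\<^sub>v v) $ i = (- k) * v $ i" if "i < N" for i
    using arg_cong[OF v(3), of "\<lambda>w. w $ i"] A v(1) that by simp
  then have "A *\<^sub>v v = (- k) \<cdot>\<^sub>v v" using A v(1) by (intro eq_vecI) auto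
  then have ev: "eigenvalue A (- k)" using A v by (auto simp: eigenvalue_def eigenvector_def)
  have fin: "finite {k. eigenvalue A k}" by (rule eigenvalues_finite[OF A(1)])
  then show "eigenvalue A (lambda_min A)" using Min_in[OF fin] ev by (auto simp: lambda_min_def)
  have "lambda_min A \<le> - k" unfolding lambda_min_def using fin ev by simp
  then show "lambda_min A * (x \<bullet> x) \<le> x \<bullet> (A *\<^sub>v x)" if "x \<in> carrier_vec N" for x
    using le[OF that] mult_right_mono[OF _ scalar_prod_self_nonneg, of "lambda_min A" "- k" x] A that
    by simp
qed

lemma pos_def_eigenvalue_pos:
  fixes A :: "real mat"
  assumes A: "A \<in> carrier_mat N N" and "pos_def N A" and "eigenvalue A k"
  shows "0 < k"
proof -
  obtain v where v: "v \<in> carrier_vec N" "v \<noteq> 0\<^sub>v N" "A *\<^sub>v v = k \<cdot>\<^sub>v v"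
    using assms by (auto simp: eigenvalue_def eigenvector_def)
  then have "0 < k * (v \<bullet> v)" using \<open>pos_def N A\<close> by (auto simp: pos_def_def)
  then show ?thesis using scalar_prod_self_nonneg[of v] by (simp add: zero_less_mult_iff)
qed

lemma pos_def_minv:
  fixes A :: "real mat"
  assumes A: "A \<in> carrier_mat N N" and "pos_def N A"
  shows "minv A \<in> carrier_mat N N" "A * minv A = 1\<^sub>m N" "minv A * A = 1\<^sub>m N"
proof -
  have "det A \<noteq> 0"
  proof
    assume "det A = 0"
    then obtain v where "v \<in> carrier_vec N" "v \<noteq> 0\<^sub>v N" "A *\<^sub>v v = 0\<^sub>v N"
      using det_0_iff_vec_prod_zero_field[OF A] by auto
    then show False using \<open>pos_def N A\<close> by (auto simp: pos_def_def)
  qed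
  then have "A \<in> Units (ring_mat TYPE(real) N ())" by (rule det_non_zero_imp_unit[OF A])
  then have "mat_inverse A \<noteq> None" using mat_inverse(1)[OF A, of "()"] by blast
  then obtain B where "mat_inverse A = Some B" by blast
  with mat_inverse(2)[OF A this]
  show "minv A \<in> carrier_mat N N" "A * minv A = 1\<^sub>m N" "minv A * A = 1\<^sub>m N" by (auto simp: minv_def)
qed

lemma inverse_sym:
  fixes Z L :: "real mat"
  assumes Z: "Z \<in> carrier_mat N N" "transpose_mat Z = Z" and L: "L \<in> carrier_mat N N"
    and ZL: "Z * L = 1\<^sub>m N"
  shows "transpose_mat L = L"
proof -
  have "transpose_mat L = transpose_mat L * (Z * L)" using ZL L by simp
  also have "\<dots> = (transpose_mat L * Z) * L" using Z L by (simp add: assoc_mult_mat[of _ N N _ N _ N])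
  also have "transpose_mat L * Z = transpose_mat (Z * L)" using Z L by (simp add: transpose_mult)
  also have "\<dots> * L = L" using ZL L by simp
  finally show ?thesis .
qed

lemma inverse_pos_def:
  fixes Z L :: "real mat"
  assumes Z: "Z \<in> carrier_mat N N" "transpose_mat Z = Z" "pos_def N Z" and L: "L \<in> carrier_mat N N"
    and ZL: "Z * L = 1\<^sub>m N"
  shows "pos_def N L"
  unfolding pos_def_def
proof (intro ballI impI)
  fix x :: "real vec" assume x: "x \<in> carrier_vec N" and "x \<noteq> 0\<^sub>v N"
  define y where "y = L *\<^sub>v x"
  have y: "y \<in> carrier_vec N" using L x by (simp add: y_def)
  have "Z *\<^sub>v y = x" using ZL Z L x by (simp add: y_def assoc_mult_mat_vec[symmetric, of _ N N _ N])
  then have "y \<noteq> 0\<^sub>v N" using \<open>x \<noteq> 0\<^sub>v N\<close> Z by auto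
  then have "0 < y \<bullet> (Z *\<^sub>v y)" using Z(3) y by (simp add: pos_def_def)
  also have "y \<bullet> (Z *\<^sub>v y) = x \<bullet> (L *\<^sub>v x)"
    using \<open>Z *\<^sub>v y = x\<close> x y by (simp add: y_def comm_scalar_prod[of _ N])
  finally show "0 < x \<bullet> (L *\<^sub>v x)" .
qed

lemma inverse_update_identities:
  fixes M B :: "real mat"
  assumes M: "M \<in> carrier_mat N N" "transpose_mat M = M"
    and B: "B \<in> carrier_mat N N" "transpose_mat B = B"
    and e: "e \<in> carrier_vec N" and y: "y \<in> carrier_vec N" and z: "z \<in> carrier_vec N"
    and My: "M *\<^sub>v y = e" and Mz: "(M + B) *\<^sub>v z = e"
  shows "e \<bullet> y - e \<bullet> z = y \<bullet> (B *\<^sub>v y) - (y - z) \<bullet> ((M + B) *\<^sub>v (y - z))"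
    and "e \<bullet> y - e \<bullet> z = z \<bullet> (B *\<^sub>v z) + (y - z) \<bullet> (M *\<^sub>v (y - z))"
    and "y \<bullet> (B *\<^sub>v (y - z)) = (y - z) \<bullet> ((M + B) *\<^sub>v (y - z))"
proof -
  have MB: "M + B \<in> carrier_mat N N" "transpose_mat (M + B) = M + B"
    using M B by (simp_all add: transpose_add)
  have split: "u \<bullet> ((M + B) *\<^sub>v v) = u \<bullet> (M *\<^sub>v v) + u \<bullet> (B *\<^sub>v v)"
    if "u \<in> carrier_vec N" "v \<in> carrier_vec N" for u v
    by (rule quad_form_add_mat[OF M(1) B(1) that])
  have ey: "y \<bullet> (M *\<^sub>v y) = e \<bullet> y" "z \<bullet> (M *\<^sub>v y) = e \<bullet> z" "z \<bullet> ((M + B) *\<^sub>v z) = e \<bullet> z"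
    using My Mz e y z by (simp_all add: comm_scalar_prod[of _ N])
  have "z \<bullet> ((M + B) *\<^sub>v y) = e \<bullet> y"
    using quad_form_sym[OF MB z y] Mz e y by (simp add: comm_scalar_prod[of _ N])
  then have gap: "e \<bullet> y - e \<bullet> z = z \<bullet> (B *\<^sub>v y)" using split[OF z y] ey by simp
  show first: "e \<bullet> y - e \<bullet> z = y \<bullet> (B *\<^sub>v y) - (y - z) \<bullet> ((M + B) *\<^sub>v (y - z))"
    using quad_form_minus[OF MB y z] split[OF y y] ey gap \<open>z \<bullet> ((M + B) *\<^sub>v y) = e \<bullet> y\<close> by simp
  show "e \<bullet> y - e \<bullet> z = z \<bullet> (B *\<^sub>v z) + (y - z) \<bullet> (M *\<^sub>v (y - z))"
    using quad_form_minus[OF M y z] split[OF z z] ey by simp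
  show "y \<bullet> (B *\<^sub>v (y - z)) = (y - z) \<bullet> ((M + B) *\<^sub>v (y - z))"
    using first gap quad_form_sym[OF B y z] B(1) y z
    by (simp add: mult_minus_distrib_mat_vec scalar_prod_minus_distrib[of _ N])
qed

lemma inverse_update_bounds:
  fixes M B :: "real mat"
  assumes M: "M \<in> carrier_mat N N" "transpose_mat M = M" "pos_semidef N M"
    and B: "B \<in> carrier_mat N N" "transpose_mat B = B" "pos_semidef N B"
    and e: "e \<in> carrier_vec N" and y: "y \<in> carrier_vec N" and z: "z \<in> carrier_vec N"
    and My: "M *\<^sub>v y = e" and Mz: "(M + B) *\<^sub>v z = e"
  shows "z \<bullet> (B *\<^sub>v z) \<le> e \<bullet> y - e \<bullet> z" "e \<bullet> y - e \<bullet> z \<le> y \<bullet> (B *\<^sub>v y)"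
    and "\<And>c. c \<le> 1 \<Longrightarrow>
          (\<And>v. v \<in> carrier_vec N \<Longrightarrow> c * (v \<bullet> ((M + B) *\<^sub>v v)) \<le> v \<bullet> (M *\<^sub>v v)) \<Longrightarrow>
          c * (y \<bullet> (B *\<^sub>v y)) \<le> e \<bullet> y - e \<bullet> z"
proof -
  note ids = inverse_update_identities[OF M(1,2) B(1,2) e y z My Mz]
  define d where "d = y - z"
  define D where "D = d \<bullet> ((M + B) *\<^sub>v d)"
  have d: "d \<in> carrier_vec N" using y z by (simp add: d_def)
  have "pos_semidef N (M + B)"
    using M(3) B(3) quad_form_add_mat[OF M(1) B(1)] by (simp add: pos_semidef_def)
  then have "0 \<le> d \<bullet> (M *\<^sub>v d)" "0 \<le> D"
    using M(3) d by (simp_all add: pos_semidef_def D_def)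
  then show "z \<bullet> (B *\<^sub>v z) \<le> e \<bullet> y - e \<bullet> z" "e \<bullet> y - e \<bullet> z \<le> y \<bullet> (B *\<^sub>v y)"
    using ids(1,2) by (simp_all add: d_def D_def)
  fix c assume "c \<le> 1" and scaled: "\<And>v. v \<in> carrier_vec N \<Longrightarrow> c * (v \<bullet> ((M + B) *\<^sub>v v)) \<le> v \<bullet> (M *\<^sub>v v)"
  have "d \<bullet> (B *\<^sub>v d) \<le> (1 - c) * D"
    using scaled[OF d] quad_form_add_mat[OF M(1) B(1) d d] by (simp add: D_def algebra_simps)
  \<comment> \<open>Cauchy--Schwarz for the form of \<open>B\<close> bounds \<open>D = y \<bullet> B d\<close> by \<open>(1 - c) (y \<bullet> B y)\<close>\<close>
  have "D\<^sup>2 \<le> (y \<bullet> (B *\<^sub>v y)) * (d \<bullet> (B *\<^sub>v d))"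
    using pos_semidef_cauchy_schwarz[OF B y d] ids(3) by (simp add: d_def D_def)
  also have "\<dots> \<le> (y \<bullet> (B *\<^sub>v y)) * ((1 - c) * D)"
    using \<open>d \<bullet> (B *\<^sub>v d) \<le> (1 - c) * D\<close> B(3) y by (intro mult_left_mono) (simp_all add: pos_semidef_def)
  finally have "D * D \<le> D * ((1 - c) * (y \<bullet> (B *\<^sub>v y)))" by (simp add: power2_eq_square algebra_simps)
  moreover have "0 \<le> (1 - c) * (y \<bullet> (B *\<^sub>v y))"
    using \<open>c \<le> 1\<close> B(3) y by (simp add: pos_semidef_def)
  ultimately have "D \<le> (1 - c) * (y \<bullet> (B *\<^sub>v y))"
    using \<open>0 \<le> D\<close> by (cases "D = 0") (auto simp: mult_le_cancel_left)
  then show "c * (y \<bullet> (B *\<^sub>v y)) \<le> e \<bullet> y - e \<bullet> z"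
    using ids(1) by (simp add: d_def D_def algebra_simps)
qed

lemma mult_vec_sq_norm_lower:
  fixes M :: "real mat"
  assumes M: "M \<in> carrier_mat N N" and v: "v \<in> carrier_vec N"
    and lower: "lam * (v \<bullet> v) \<le> v \<bullet> (M *\<^sub>v v)" and "0 \<le> lam"
  shows "lam\<^sup>2 * (v \<bullet> v) \<le> (M *\<^sub>v v) \<bullet> (M *\<^sub>v v)"
proof -
  have Mv: "M *\<^sub>v v \<in> carrier_vec N" using M v by simp
  have "(lam * (v \<bullet> v))\<^sup>2 \<le> (v \<bullet> (M *\<^sub>v v))\<^sup>2"
    using lower \<open>0 \<le> lam\<close> scalar_prod_self_nonneg[of v] by (simp add: power_mono)
  also have "\<dots> \<le> (v \<bullet> v) * ((M *\<^sub>v v) \<bullet> (M *\<^sub>v v))"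
    using pos_semidef_cauchy_schwarz[OF one_carrier_mat _ pos_semidef_one v Mv] v Mv by simp
  finally have "(v \<bullet> v) * (lam\<^sup>2 * (v \<bullet> v)) \<le> (v \<bullet> v) * ((M *\<^sub>v v) \<bullet> (M *\<^sub>v v))"
    by (simp add: power2_eq_square algebra_simps)
  then show ?thesis
    using scalar_prod_self_nonneg[of v] scalar_prod_self_nonneg[of "M *\<^sub>v v"]
    by (cases "v \<bullet> v = 0") (auto simp: mult_le_cancel_left)
qed

lemma mult_vec_sq_norm_upper:
  fixes M :: "real mat"
  assumes M: "M \<in> carrier_mat N N" "transpose_mat M = M" "pos_semidef N M"
    and upper: "\<And>v. v \<in> carrier_vec N \<Longrightarrow> v \<bullet> (M *\<^sub>v v) \<le> Lam * (v \<bullet> v)"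
    and w: "w \<in> carrier_vec N"
  shows "(M *\<^sub>v w) \<bullet> (M *\<^sub>v w) \<le> Lam\<^sup>2 * (w \<bullet> w)"
proof -
  define h where "h = M *\<^sub>v w"
  have h: "h \<in> carrier_vec N" using M w by (simp add: h_def)
  have "(h \<bullet> h)\<^sup>2 = (w \<bullet> (M *\<^sub>v h))\<^sup>2"
    using quad_form_sym[OF M(1,2) w h] h by (simp add: h_def comm_scalar_prod[of _ N])
  also have "\<dots> \<le> (w \<bullet> (M *\<^sub>v w)) * (h \<bullet> (M *\<^sub>v h))"
    by (rule pos_semidef_cauchy_schwarz[OF M w h])
  also have "\<dots> \<le> (Lam * (w \<bullet> w)) * (Lam * (h \<bullet> h))"
    using upper[OF w] upper[OF h] M(3) w h by (intro mult_mono) (auto simp: pos_semidef_def)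
  finally have "(h \<bullet> h) * (h \<bullet> h) \<le> (h \<bullet> h) * (Lam\<^sup>2 * (w \<bullet> w))"
    by (simp add: power2_eq_square algebra_simps)
  then show ?thesis
    using scalar_prod_self_nonneg[of h] scalar_prod_self_nonneg[of w]
    by (cases "h \<bullet> h = 0") (auto simp: h_def mult_le_cancel_left)
qed

lemma mtrace_unit_vec:
  fixes P :: "real mat"
  assumes P: "P \<in> carrier_mat N N"
  shows "mtrace P = (\<Sum>i<N. unit_vec N i \<bullet> (P *\<^sub>v unit_vec N i))"
  using P by (simp add: mtrace_def scalar_prod_left_unit scalar_prod_right_unit)

lemma quad_form_unit_vec:
  fixes P :: "real mat"
  assumes "P \<in> carrier_mat N N" "r < N" "c < N"
  shows "unit_vec N r \<bullet> (P *\<^sub>v unit_vec N c) = P $$ (r, c)"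
  using assms by (simp add: scalar_prod_left_unit scalar_prod_right_unit)

lemma sum_sq_quad_form_unit_vec:
  fixes Q :: "real mat"
  assumes Q: "Q \<in> carrier_mat N N" "transpose_mat Q = Q" and h: "h \<in> carrier_vec N"
  shows "(\<Sum>i<N. (h \<bullet> (Q *\<^sub>v unit_vec N i))\<^sup>2) = (Q *\<^sub>v h) \<bullet> (Q *\<^sub>v h)"
proof -
  have "h \<bullet> (Q *\<^sub>v unit_vec N i) = (Q *\<^sub>v h) $ i" if "i < N" for i
    using quad_form_sym[OF Q h, of "unit_vec N i"] Q h that by (simp add: scalar_prod_left_unit)
  then show ?thesis
    using Q h by (simp add: scalar_prod_sum_lessThan[of _ N] power2_eq_square)
qed

section \<open>Block matrices of the smoothing problem\<close>

lemma sum_lessThan_mult_div_mod: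
  fixes F :: "nat \<Rightarrow> nat \<Rightarrow> 'a :: comm_monoid_add"
  shows "(\<Sum>a<l * m. F (a div m) (a mod m)) = (\<Sum>t<l. \<Sum>i<m. F t i)"
proof (induction l)
  case (Suc l)
  have "{..<Suc l * m} = {..<l * m} \<union> {l * m..<l * m + m}" by auto
  then have "(\<Sum>a<Suc l * m. F (a div m) (a mod m)) =
      (\<Sum>a<l * m. F (a div m) (a mod m)) + (\<Sum>a\<in>{l * m..<l * m + m}. F (a div m) (a mod m))"
    by (simp add: sum.union_disjoint ivl_disj_int_one(2))
  also have "(\<Sum>a\<in>{l * m..<l * m + m}. F (a div m) (a mod m)) = (\<Sum>i<m. F l i)"
    using sum.shift_bounds_nat_ivl[of "\<lambda>a. F (a div m) (a mod m)" 0 "l * m" m]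
    by (simp add: add.commute lessThan_atLeast0)
  finally show ?case using Suc by simp
qed simp

lemma sum_sorted_list_of_set_nth:
  assumes "finite S"
  shows "(\<Sum>i<card S. H (sorted_list_of_set S ! i)) = sum H S"
proof -
  have "sum H S = sum_list (map H (sorted_list_of_set S))"
    using sum.distinct_set_conv_list[OF distinct_sorted_list_of_set, of H S] assms by simp
  also have "\<dots> = (\<Sum>i<card S. H (sorted_list_of_set S ! i))"
    using assms by (simp add: sum_list_sum_nth lessThan_atLeast0)
  finally show ?thesis by simp
qed

lemma minv_diagonal:
  fixes D :: "real mat"
  assumes D: "D \<in> carrier_mat N N" and entries: "\<And>a b. a < N \<Longrightarrow> b < N \<Longrightarrow> D $$ (a, b) = (if a = b then d a else 0)"
    and nz: "\<And>a. a < N \<Longrightarrow> d a \<noteq> 0"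
  shows "minv D = mat N N (\<lambda>(a, b). if a = b then 1 / d a else 0)"
proof -
  define E where "E = mat N N (\<lambda>(a, b). if a = b then 1 / d a else 0)"
  have E: "E \<in> carrier_mat N N" by (simp add: E_def)
  have DE: "D * E = 1\<^sub>m N"
  proof (rule eq_matI)
    fix a b assume "a < dim_row (1\<^sub>m N)" "b < dim_col (1\<^sub>m N)"
    then have ab: "a < N" "b < N" by auto
    have "(D * E) $$ (a, b) = (\<Sum>c = 0..<N. D $$ (a, c) * E $$ (c, b))"
      using ab D E by (simp add: scalar_prod_def)
    also have "\<dots> = (\<Sum>c = 0..<N. if c = a then d a * E $$ (a, b) else 0)"
      by (rule sum.cong) (auto simp: entries ab)
    also have "\<dots> = 1\<^sub>m N $$ (a, b)" using ab nz[of a] by (auto simp: E_def)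
    finally show "(D * E) $$ (a, b) = 1\<^sub>m N $$ (a, b)" .
  qed (use D E in auto)
  have "det D * det E = 1" using det_mult[OF D E] DE by simp
  then have "D \<in> Units (ring_mat TYPE(real) N ())" by (intro det_non_zero_imp_unit[OF D]) auto
  then obtain B where B: "mat_inverse D = Some B"
    using mat_inverse(1)[OF D, of "()"] by (cases "mat_inverse D") auto
  then have "B * D = 1\<^sub>m N" "B \<in> carrier_mat N N" using mat_inverse(2)[OF D] by auto
  then have "B = B * (D * E)" using DE by simp
  also have "\<dots> = E" using \<open>B * D = 1\<^sub>m N\<close> \<open>B \<in> carrier_mat N N\<close> D E by (simp add: assoc_mult_mat[symmetric])
  finally have "B = E" .
  then show ?thesis using B by (simp add: minv_def E_def)
qed

definition block_vec :: "nat \<Rightarrow> nat \<Rightarrow> real vec \<Rightarrow> real vec" where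
  "block_vec n t x = vec n (\<lambda>i. x $ (t * n + i))"

lemma block_vec_carrier [simp]: "block_vec n t x \<in> carrier_vec n"
  by (simp add: block_vec_def)

lemma sym_posdef_imp_pos_def:
  assumes "sym_posdef n X"
  shows "X \<in> carrier_mat n n" "transpose_mat X = X" "pos_def n X"
  using assms by (auto simp: sym_posdef_def pos_def_def)

lemma Z_mat_carrier: "Z_mat n l X0 W \<in> carrier_mat (n * l) (n * l)"
  by (simp add: Z_mat_def)

lemma Z_mat_sym:
  assumes "sym_posdef n X0" "sym_posdef n W"
  shows "transpose_mat (Z_mat n l X0 W) = Z_mat n l X0 W"
proof -
  have sym: "X $$ (a, b) = X $$ (b, a)" if "sym_posdef n X" "a < n" "b < n" for X a b
  proof -
    have "X \<in> carrier_mat n n" "transpose_mat X = X" using that(1) by (auto simp: sym_posdef_def)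
    have "X $$ (a, b) = transpose_mat X $$ (b, a)" using \<open>X \<in> carrier_mat n n\<close> that(2,3) by simp
    then show ?thesis using \<open>transpose_mat X = X\<close> by simp
  qed
  show ?thesis
  proof (rule eq_matI)
    fix i j assume "i < dim_row (Z_mat n l X0 W)" "j < dim_col (Z_mat n l X0 W)"
    then have ij: "i < n * l" "j < n * l" by (auto simp: Z_mat_def)
    then have "0 < n" by (cases n) auto
    then show "transpose_mat (Z_mat n l X0 W) $$ (i, j) = Z_mat n l X0 W $$ (i, j)"
      using ij sym[OF assms(1)] sym[OF assms(2)] by (auto simp: Z_mat_def)
  qed (auto simp: Z_mat_def)
qed

lemma Z_mat_mult_vec_index:
  assumes X0: "X0 \<in> carrier_mat n n" and W: "W \<in> carrier_mat n n"
    and x: "x \<in> carrier_vec (n * l)" and r: "r < n * l"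
  shows "(Z_mat n l X0 W *\<^sub>v x) $ r = ((if r div n = 0 then X0 else W) *\<^sub>v block_vec n (r div n) x) $ (r mod n)"
proof -
  have "0 < n" using r by (cases n) auto
  have "r div n < l" using r by (simp add: less_mult_imp_div_less mult.commute)
  define X where "X = (if r div n = 0 then X0 else W)"
  have X: "X \<in> carrier_mat n n" using X0 W by (simp add: X_def)
  have "(Z_mat n l X0 W *\<^sub>v x) $ r = (\<Sum>c<n * l. Z_mat n l X0 W $$ (r, c) * x $ c)"
    using r x by (simp add: scalar_prod_def Z_mat_def lessThan_atLeast0)
  also have "\<dots> = (\<Sum>c<l * n. (if r div n = c div n then X $$ (r mod n, c mod n) else 0) * x $ (c div n * n + c mod n))"
    using r by (intro sum.cong) (auto simp: Z_mat_def X_def mult.commute)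
  also have "\<dots> = (\<Sum>t<l. \<Sum>i<n. (if r div n = t then X $$ (r mod n, i) else 0) * x $ (t * n + i))"
    by (rule sum_lessThan_mult_div_mod)
  also have "\<dots> = (\<Sum>t<l. if t = r div n then (\<Sum>i<n. X $$ (r mod n, i) * x $ (t * n + i)) else 0)"
    by (intro sum.cong) auto
  also have "\<dots> = (\<Sum>i<n. X $$ (r mod n, i) * x $ (r div n * n + i))"
    using \<open>r div n < l\<close> by simp
  also have "\<dots> = (X *\<^sub>v block_vec n (r div n) x) $ (r mod n)"
    using X \<open>0 < n\<close> by (simp add: scalar_prod_def block_vec_def lessThan_atLeast0)
  finally show ?thesis by (simp add: X_def)
qed

lemma Z_mat_quad_form:
  assumes X0: "X0 \<in> carrier_mat n n" and W: "W \<in> carrier_mat n n"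
    and x: "x \<in> carrier_vec (n * l)"
  shows "x \<bullet> (Z_mat n l X0 W *\<^sub>v x) =
    (\<Sum>t<l. block_vec n t x \<bullet> ((if t = 0 then X0 else W) *\<^sub>v block_vec n t x))"
proof -
  have "x \<bullet> (Z_mat n l X0 W *\<^sub>v x) = (\<Sum>r<n * l. x $ r * (Z_mat n l X0 W *\<^sub>v x) $ r)"
    using x Z_mat_carrier[of n l X0 W] by (simp add: scalar_prod_sum_lessThan[of _ "n * l"])
  also have "\<dots> = (\<Sum>r<l * n. x $ (r div n * n + r mod n) *
      ((if r div n = 0 then X0 else W) *\<^sub>v block_vec n (r div n) x) $ (r mod n))"
    by (intro sum.cong) (auto simp: Z_mat_mult_vec_index[OF X0 W x] mult.commute)
  also have "\<dots> = (\<Sum>t<l. \<Sum>i<n. x $ (t * n + i) * ((if t = 0 then X0 else W) *\<^sub>v block_vec n t x) $ i)"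
    by (rule sum_lessThan_mult_div_mod)
  also have "\<dots> = (\<Sum>t<l. block_vec n t x \<bullet> ((if t = 0 then X0 else W) *\<^sub>v block_vec n t x))"
    using X0 W by (intro sum.cong) (auto simp: scalar_prod_sum_lessThan[of _ n] block_vec_def)
  finally show ?thesis .
qed

lemma Z_mat_pos_def:
  assumes X0: "sym_posdef n X0" and W: "sym_posdef n W"
  shows "pos_def (n * l) (Z_mat n l X0 W)"
  unfolding pos_def_def
proof (intro ballI impI)
  fix x :: "real vec" assume x: "x \<in> carrier_vec (n * l)" and "x \<noteq> 0\<^sub>v (n * l)"
  define X where "X t = (if t = 0 then X0 else W)" for t :: nat
  have X: "sym_posdef n (X t)" for t using X0 W by (simp add: X_def)
  obtain r where r: "r < n * l" "x $ r \<noteq> 0"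
  proof (rule ccontr)
    assume "\<not> thesis"
    then have "x = 0\<^sub>v (n * l)" using that x by (intro eq_vecI) auto
    then show False using \<open>x \<noteq> 0\<^sub>v (n * l)\<close> by contradiction
  qed
  have "0 < n" using r by (cases n) auto
  have "r div n < l" using r by (simp add: less_mult_imp_div_less mult.commute)
  have "block_vec n (r div n) x $ (r mod n) = x $ r" using \<open>0 < n\<close> by (simp add: block_vec_def)
  then have "block_vec n (r div n) x \<noteq> 0\<^sub>v n" using r \<open>0 < n\<close> by auto
  then have "0 < block_vec n (r div n) x \<bullet> (X (r div n) *\<^sub>v block_vec n (r div n) x)"
    using X[of "r div n"] by (simp add: sym_posdef_def)
  also have "\<dots> \<le> (\<Sum>t<l. block_vec n t x \<bullet> (X t *\<^sub>v block_vec n t x))"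
  proof (rule member_le_sum)
    show "0 \<le> block_vec n t x \<bullet> (X t *\<^sub>v block_vec n t x)" for t
      using pos_def_imp_pos_semidef[OF sym_posdef_imp_pos_def(1,3)[OF X[of t]]]
      by (simp add: pos_semidef_def)
  qed (use \<open>r div n < l\<close> in auto)
  also have "\<dots> = x \<bullet> (Z_mat n l X0 W *\<^sub>v x)"
    using Z_mat_quad_form[OF _ _ x] X0 W by (simp add: X_def sym_posdef_def)
  finally show "0 < x \<bullet> (Z_mat n l X0 W *\<^sub>v x)" .
qed

lemma L_mat_props:
  assumes "sym_posdef n X0" "sym_posdef n W"
  shows "L_mat n l X0 W \<in> carrier_mat (n * l) (n * l)" "transpose_mat (L_mat n l X0 W) = L_mat n l X0 W"
    "pos_def (n * l) (L_mat n l X0 W)"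
proof -
  note Z = Z_mat_carrier[of n l X0 W] Z_mat_sym[OF assms, of l] Z_mat_pos_def[OF assms, of l]
  note inv = pos_def_minv[OF Z(1) Z(3)]
  show "L_mat n l X0 W \<in> carrier_mat (n * l) (n * l)" using inv by (simp add: L_mat_def)
  show "transpose_mat (L_mat n l X0 W) = L_mat n l X0 W"
    using inverse_sym[OF Z(1,2) inv(1,2)] by (simp add: L_mat_def)
  show "pos_def (n * l) (L_mat n l X0 W)"
    using inverse_pos_def[OF Z inv(1,2)] by (simp add: L_mat_def)
qed

lemma quad_form_transpose_diag_mult:
  fixes G :: "real mat"
  assumes G: "G \<in> carrier_mat m N" and u: "u \<in> carrier_vec N" and v: "v \<in> carrier_vec N"
  shows "u \<bullet> ((transpose_mat G * mat m m (\<lambda>(a, b). if a = b then e a else 0) * G) *\<^sub>v v)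
    = (\<Sum>a<m. e a * (G *\<^sub>v u) $ a * (G *\<^sub>v v) $ a)"
proof -
  define D where "D = mat m m (\<lambda>(a, b). if a = b then e a else 0 :: real)"
  have D: "D \<in> carrier_mat m m" by (simp add: D_def)
  have Dw: "(D *\<^sub>v w) $ a = e a * w $ a" if "a < m" "w \<in> carrier_vec m" for a w
  proof -
    have "(D *\<^sub>v w) $ a = (\<Sum>c = 0..<m. D $$ (a, c) * w $ c)"
      using that D by (simp add: scalar_prod_def)
    also have "\<dots> = (\<Sum>c = 0..<m. if c = a then e a * w $ a else 0)"
      using that by (intro sum.cong) (auto simp: D_def)
    finally show ?thesis using that by simp
  qed
  have GD: "transpose_mat G * D \<in> carrier_mat N m" using G D by simp
  have "(transpose_mat G * D * G) *\<^sub>v v = (transpose_mat G * D) *\<^sub>v (G *\<^sub>v v)"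
    using assoc_mult_mat_vec[OF GD G v] .
  also have "\<dots> = transpose_mat G *\<^sub>v (D *\<^sub>v (G *\<^sub>v v))"
    using G D v by (simp add: assoc_mult_mat_vec[of _ N m _ m])
  finally have "(transpose_mat G * D * G) *\<^sub>v v = transpose_mat G *\<^sub>v (D *\<^sub>v (G *\<^sub>v v))" .
  moreover have DGv: "D *\<^sub>v (G *\<^sub>v v) \<in> carrier_vec m" using G D v by simp
  ultimately have "u \<bullet> ((transpose_mat G * D * G) *\<^sub>v v) = (G *\<^sub>v u) \<bullet> (D *\<^sub>v (G *\<^sub>v v))"
    using transpose_vec_mult_scalar[OF G u DGv] G u
    by (simp add: comm_scalar_prod[of u N] comm_scalar_prod[of "G *\<^sub>v u" m])
  also have "\<dots> = (\<Sum>a<m. (G *\<^sub>v u) $ a * (D *\<^sub>v (G *\<^sub>v v)) $ a)"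
    using G u DGv by (simp add: scalar_prod_sum_lessThan[of _ m])
  also have "\<dots> = (\<Sum>a<m. e a * (G *\<^sub>v u) $ a * (G *\<^sub>v v) $ a)"
    using G v by (intro sum.cong) (auto simp: Dw)
  finally show ?thesis by (simp add: D_def)
qed

lemma kron_eye_carrier: "M \<in> carrier_mat a b \<Longrightarrow> kron_eye l M \<in> carrier_mat (l * a) (l * b)"
  by (simp add: kron_eye_def)

lemma kron_eye_index:
  "M \<in> carrier_mat a b \<Longrightarrow> r < l * a \<Longrightarrow> c < l * b \<Longrightarrow>
    kron_eye l M $$ (r, c) = (if r div a = c div b then M $$ (r mod a, c mod b) else 0)"
  by (simp add: kron_eye_def)

lemma sel_mat_carrier: "sel_mat p S \<in> carrier_mat (card S) p"
  by (simp add: sel_mat_def)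

lemma sorted_list_of_set_nth_mem:
  assumes "finite S" "i < card S"
  shows "sorted_list_of_set S ! i \<in> S"
  using assms nth_mem[of i "sorted_list_of_set S"] by simp

lemma sel_mat_mult_index:
  fixes C :: "real mat"
  assumes S: "S \<subseteq> {..<p}" and C: "C \<in> carrier_mat p n" and i: "i < card S" and k: "k < n"
  shows "(sel_mat p S * C) $$ (i, k) = C $$ (sorted_list_of_set S ! i, k)"
proof -
  define x where "x = sorted_list_of_set S ! i"
  have "x < p" using sorted_list_of_set_nth_mem[OF finite_subset[OF S] i] S by (auto simp: x_def)
  have "(sel_mat p S * C) $$ (i, k) = (\<Sum>j = 0..<p. sel_mat p S $$ (i, j) * C $$ (j, k))"
    using i k C by (simp add: sel_mat_def scalar_prod_def)
  also have "\<dots> = (\<Sum>j = 0..<p. if j = x then C $$ (j, k) else 0)"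
    using i by (intro sum.cong) (auto simp: sel_mat_def x_def)
  finally show ?thesis using \<open>x < p\<close> by (simp add: x_def)
qed

lemma sel_V_sel_index:
  assumes S: "S \<subseteq> {..<p}" and i: "i < card S" and i': "i' < card S"
  shows "(sel_mat p S * V_mat p sigma * transpose_mat (sel_mat p S)) $$ (i, i') =
    (if i = i' then (sigma (sorted_list_of_set S ! i))\<^sup>2 else 0)"
proof -
  define xs where "xs = sorted_list_of_set S"
  have fin: "finite S" using S finite_subset by blast
  have xs: "xs ! i < p" "xs ! i' < p"
    using sorted_list_of_set_nth_mem[OF fin] i i' S by (auto simp: xs_def)
  have V: "V_mat p sigma \<in> carrier_mat p p" by (simp add: V_mat_def)
  have SV: "(sel_mat p S * V_mat p sigma) $$ (i, j) = (if j = xs ! i then (sigma (xs ! i))\<^sup>2 else 0)"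
    if "j < p" for j
  proof -
    have "(sel_mat p S * V_mat p sigma) $$ (i, j) = (\<Sum>k = 0..<p. sel_mat p S $$ (i, k) * V_mat p sigma $$ (k, j))"
      using i that V by (simp add: sel_mat_def scalar_prod_def)
    also have "\<dots> = (\<Sum>k = 0..<p. if k = xs ! i then V_mat p sigma $$ (k, j) else 0)"
      using i by (intro sum.cong) (auto simp: sel_mat_def xs_def)
    finally show ?thesis using xs that by (auto simp: V_mat_def)
  qed
  then have "(sel_mat p S * V_mat p sigma * transpose_mat (sel_mat p S)) $$ (i, i') =
      (\<Sum>j = 0..<p. if j = xs ! i then (if xs ! i = xs ! i' then (sigma (xs ! i))\<^sup>2 else 0) else 0)"
  proof -
    have "(sel_mat p S * V_mat p sigma * transpose_mat (sel_mat p S)) $$ (i, i') =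
        (\<Sum>j = 0..<p. (sel_mat p S * V_mat p sigma) $$ (i, j) * transpose_mat (sel_mat p S) $$ (j, i'))"
      using i i' V by (simp add: sel_mat_def scalar_prod_def)
    also have "\<dots> = (\<Sum>j = 0..<p. if j = xs ! i then (if xs ! i = xs ! i' then (sigma (xs ! i))\<^sup>2 else 0) else 0)"
    proof (rule sum.cong)
      fix j assume "j \<in> {0..<p}"
      moreover have "transpose_mat (sel_mat p S) $$ (j, i') = (if j = xs ! i' then 1 else 0)" if "j < p"
        using i' that by (simp add: sel_mat_def xs_def)
      ultimately show "(sel_mat p S * V_mat p sigma) $$ (i, j) * transpose_mat (sel_mat p S) $$ (j, i') =
          (if j = xs ! i then (if xs ! i = xs ! i' then (sigma (xs ! i))\<^sup>2 else 0) else 0)"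
        by (auto simp: SV)
    qed simp
    finally show ?thesis .
  qed
  also have "\<dots> = (if i = i' then (sigma (xs ! i))\<^sup>2 else 0)"
    using xs i i' fin by (simp add: xs_def nth_eq_iff_index_eq)
  finally show ?thesis by (simp add: xs_def)
qed

lemma Phi_mat_carrier: "Phi_mat n l A \<in> carrier_mat (n * l) (n * l)"
  by (simp add: Phi_mat_def)

text \<open>\<open>info_vec n l A C sigma j t\<close> is the measurement of sensor \<open>j\<close> at time \<open>t\<close>, divided by its noise
  level, as a linear functional of the stacked vector \<open>(x\<^sub>0, w\<^sub>0, \<dots>)\<close> (via \<open>\<Phi>\<close>); \<open>U\<^sub>S\<close> is the
  sum of the outer products of these functionals over \<open>j \<in> S\<close> (\<open>U_mat_quad_form\<close>).\<close>

definition sensor_row_vec :: "nat \<Rightarrow> nat \<Rightarrow> real mat \<Rightarrow> nat \<Rightarrow> nat \<Rightarrow> real vec" where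
  "sensor_row_vec n l C j t = vec (n * l) (\<lambda>b. if b div n = t then C $$ (j, b mod n) else 0)"

definition info_vec :: "nat \<Rightarrow> nat \<Rightarrow> real mat \<Rightarrow> real mat \<Rightarrow> (nat \<Rightarrow> real) \<Rightarrow> nat \<Rightarrow> nat \<Rightarrow> real vec" where
  "info_vec n l A C sigma j t =
     (1 / sigma j) \<cdot>\<^sub>v (transpose_mat (Phi_mat n l A) *\<^sub>v sensor_row_vec n l C j t)"

lemma info_vec_carrier [simp]: "info_vec n l A C sigma j t \<in> carrier_vec (n * l)"
proof -
  have "transpose_mat (Phi_mat n l A) \<in> carrier_mat (n * l) (n * l)" using Phi_mat_carrier by simp
  moreover have "sensor_row_vec n l C j t \<in> carrier_vec (n * l)" by (simp add: sensor_row_vec_def)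
  ultimately show ?thesis by (simp add: info_vec_def)
qed

lemma info_vec_scalar_prod:
  assumes "u \<in> carrier_vec (n * l)"
  shows "info_vec n l A C sigma j t \<bullet> u = (sensor_row_vec n l C j t \<bullet> (Phi_mat n l A *\<^sub>v u)) / sigma j"
proof -
  have c: "sensor_row_vec n l C j t \<in> carrier_vec (n * l)" by (simp add: sensor_row_vec_def)
  have "info_vec n l A C sigma j t \<bullet> u =
      (1 / sigma j) * ((transpose_mat (Phi_mat n l A) *\<^sub>v sensor_row_vec n l C j t) \<bullet> u)"
    using assms c Phi_mat_carrier[of n l A] by (simp add: info_vec_def)
  then show ?thesis using transpose_vec_mult_scalar[OF Phi_mat_carrier assms c] by simp
qed

lemma G_mat_mult_vec_index:
  fixes C :: "real mat"
  assumes "0 < n" and S: "S \<subseteq> {..<p}" and C: "C \<in> carrier_mat p n" and "S \<noteq> {}"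
    and w: "w \<in> carrier_vec (n * l)" and a: "a < l * card S"
  shows "(G_mat n p l A C S *\<^sub>v w) $ a =
    sensor_row_vec n l C (sorted_list_of_set S ! (a mod card S)) (a div card S) \<bullet> (Phi_mat n l A *\<^sub>v w)"
proof -
  define m where "m = card S"
  have "0 < m" using \<open>S \<noteq> {}\<close> S by (simp add: m_def card_gt_0_iff finite_subset)
  have SC: "sel_mat p S * C \<in> carrier_mat m n" using mult_carrier_mat[OF sel_mat_carrier C] by (simp add: m_def)
  define K where "K = kron_eye l (sel_mat p S * C)"
  have K: "K \<in> carrier_mat (l * m) (n * l)" using kron_eye_carrier[OF SC, of l] by (simp add: K_def mult.commute)
  have "row K a = sensor_row_vec n l C (sorted_list_of_set S ! (a mod m)) (a div m)"
  proof (rule eq_vecI)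
    fix b assume "b < dim_vec (sensor_row_vec n l C (sorted_list_of_set S ! (a mod m)) (a div m))"
    then have b: "b < l * n" by (simp add: sensor_row_vec_def mult.commute)
    have "a mod m < card S" "b mod n < n" using \<open>0 < m\<close> \<open>0 < n\<close> by (auto simp: m_def)
    then show "row K a $ b = sensor_row_vec n l C (sorted_list_of_set S ! (a mod m)) (a div m) $ b"
      using K a b kron_eye_index[OF SC, of a l b] sel_mat_mult_index[OF S C]
      by (auto simp: K_def sensor_row_vec_def m_def mult.commute)
  qed (use K in \<open>simp add: sensor_row_vec_def\<close>)
  moreover have "G_mat n p l A C S *\<^sub>v w = K *\<^sub>v (Phi_mat n l A *\<^sub>v w)"
    using K Phi_mat_carrier w by (simp add: G_mat_def K_def assoc_mult_mat_vec[of _ "l * m" "n * l" _ "n * l"])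
  ultimately show ?thesis using K a Phi_mat_carrier w by (simp add: m_def)
qed

lemma minv_VS_mat:
  assumes S: "S \<subseteq> {..<p}" and sigma: "\<forall>i<p. sigma i > 0"
  shows "minv (VS_mat p l sigma S) =
    mat (l * card S) (l * card S) (\<lambda>(a, b). if a = b then 1 / (sigma (sorted_list_of_set S ! (a mod card S)))\<^sup>2 else 0)"
proof -
  define m where "m = card S"
  define xs where "xs = sorted_list_of_set S"
  have fin: "finite S" using S finite_subset by blast
  have SVS: "sel_mat p S * V_mat p sigma * transpose_mat (sel_mat p S) \<in> carrier_mat m m"
  proof -
    have "V_mat p sigma \<in> carrier_mat p p" by (simp add: V_mat_def)
    then show ?thesis using sel_mat_carrier[of p S] by (simp add: m_def mult_carrier_mat[of _ m p _ p])
  qed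
  have entries: "VS_mat p l sigma S $$ (a, b) = (if a = b then (sigma (xs ! (a mod m)))\<^sup>2 else 0)"
    if "a < l * m" "b < l * m" for a b
  proof -
    have "0 < m" using that by (cases m) auto
    then have "a mod m < card S" "b mod m < card S" by (auto simp: m_def)
    then have "VS_mat p l sigma S $$ (a, b) =
        (if a div m = b div m \<and> a mod m = b mod m then (sigma (xs ! (a mod m)))\<^sup>2 else 0)"
      using kron_eye_index[OF SVS that] sel_V_sel_index[OF S] by (simp add: VS_mat_def xs_def m_def)
    also have "(a div m = b div m \<and> a mod m = b mod m) \<longleftrightarrow> a = b" by (metis div_mult_mod_eq)
    finally show ?thesis .
  qed
  have nonzero: "(sigma (xs ! (a mod m)))\<^sup>2 \<noteq> 0" if "a < l * m" for a
  proof -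
    have "0 < m" using that by (cases m) auto
    then have "xs ! (a mod m) \<in> S" using sorted_list_of_set_nth_mem[OF fin] by (simp add: xs_def m_def)
    then have "xs ! (a mod m) < p" using S by auto
    then show ?thesis using sigma by (metis less_irrefl power_not_zero)
  qed
  have "VS_mat p l sigma S \<in> carrier_mat (l * m) (l * m)"
    using kron_eye_carrier[OF SVS, of l] by (simp add: VS_mat_def)
  from minv_diagonal[OF this entries nonzero] show ?thesis unfolding xs_def m_def .
qed

lemma G_mat_carrier:
  assumes C: "C \<in> carrier_mat p n"
  shows "G_mat n p l A C S \<in> carrier_mat (l * card S) (n * l)"
proof -
  have "sel_mat p S * C \<in> carrier_mat (card S) n" using mult_carrier_mat[OF sel_mat_carrier C] .
  then have "kron_eye l (sel_mat p S * C) \<in> carrier_mat (l * card S) (l * n)" by (rule kron_eye_carrier)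
  moreover have "Phi_mat n l A \<in> carrier_mat (l * n) (n * l)" using Phi_mat_carrier[of n l A] by (simp add: mult.commute)
  ultimately show ?thesis unfolding G_mat_def by (rule mult_carrier_mat)
qed

lemma U_mat_carrier:
  assumes C: "C \<in> carrier_mat p n" and S: "S \<subseteq> {..<p}" and sigma: "\<forall>i<p. sigma i > 0"
  shows "U_mat n p l A C sigma S \<in> carrier_mat (n * l) (n * l)"
proof -
  note G = G_mat_carrier[OF C, of l A S]
  have "transpose_mat (G_mat n p l A C S) * minv (VS_mat p l sigma S) \<in> carrier_mat (n * l) (l * card S)"
    using G by (simp add: minv_VS_mat[OF S sigma] mult_carrier_mat[of _ "n * l" "l * card S"])
  then show ?thesis using G by (simp add: U_mat_def mult_carrier_mat[of _ "n * l" "l * card S"])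
qed

lemma U_mat_quad_form:
  fixes A C :: "real mat"
  assumes "0 < n" and C: "C \<in> carrier_mat p n" and sigma: "\<forall>i<p. sigma i > 0" and S: "S \<subseteq> {..<p}"
    and u: "u \<in> carrier_vec (n * l)" and v: "v \<in> carrier_vec (n * l)"
  shows "u \<bullet> (U_mat n p l A C sigma S *\<^sub>v v) =
      (\<Sum>j\<in>S. \<Sum>t<l. (info_vec n l A C sigma j t \<bullet> u) * (info_vec n l A C sigma j t \<bullet> v))"
proof (cases "S = {}")
  case True
  have "0\<^sub>m (n * l) (n * l) *\<^sub>v v = 0\<^sub>v (n * l)"
    using v by (intro eq_vecI) (auto simp: scalar_prod_def)
  then show ?thesis using True u by (simp add: U_mat_def)
next
  case False
  define m where "m = card S"
  define xs where "xs = sorted_list_of_set S"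
  define h where "h a = info_vec n l A C sigma (xs ! (a mod m)) (a div m)" for a
  note G = G_mat_carrier[OF C, of l A S]
  have G_h: "(G_mat n p l A C S *\<^sub>v w) $ a / sigma (xs ! (a mod m)) = h a \<bullet> w"
    if "a < l * m" "w \<in> carrier_vec (n * l)" for a w
    using G_mat_mult_vec_index[OF \<open>0 < n\<close> S C False that(2)] that
    by (simp add: info_vec_scalar_prod h_def xs_def m_def)
  have "u \<bullet> (U_mat n p l A C sigma S *\<^sub>v v) = (\<Sum>a<l * m. 1 / (sigma (xs ! (a mod m)))\<^sup>2 *
      (G_mat n p l A C S *\<^sub>v u) $ a * (G_mat n p l A C S *\<^sub>v v) $ a)"
    using quad_form_transpose_diag_mult[OF G u v] False
    by (simp add: U_mat_def minv_VS_mat[OF S sigma] xs_def m_def)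
  also have "\<dots> = (\<Sum>a<l * m. (h a \<bullet> u) * (h a \<bullet> v))"
    by (intro sum.cong) (auto simp: G_h[symmetric] u v power2_eq_square)
  also have "\<dots> = (\<Sum>t<l. \<Sum>i<m. (info_vec n l A C sigma (xs ! i) t \<bullet> u) * (info_vec n l A C sigma (xs ! i) t \<bullet> v))"
    unfolding h_def by (rule sum_lessThan_mult_div_mod)
  also have "\<dots> = (\<Sum>t<l. \<Sum>j\<in>S. (info_vec n l A C sigma j t \<bullet> u) * (info_vec n l A C sigma j t \<bullet> v))"
    using finite_subset[OF S finite_lessThan] unfolding xs_def m_def
    by (intro sum.cong refl sum_sorted_list_of_set_nth)
  finally show ?thesis by (simp add: sum.swap[of _ "{..<l}"])
qed

section \<open>Submodularity ratio and curvature of the MSE reduction\<close>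

locale smoothing_system =
  fixes n p l :: nat and A C X0 W :: "real mat" and sigma :: "nat \<Rightarrow> real"
  assumes n_pos: "0 < n" and l_pos: "0 < l"
    and C: "C \<in> carrier_mat p n"
    and X0: "sym_posdef n X0" and W: "sym_posdef n W"
    and sigma_pos: "\<forall>i<p. sigma i > 0"
begin

abbreviation "N \<equiv> n * l"
abbreviation "L \<equiv> L_mat n l X0 W"
abbreviation "U \<equiv> U_mat n p l A C sigma"
abbreviation "M S \<equiv> L + U S"
abbreviation "J \<equiv> J_fun n p l A C X0 W sigma"
abbreviation "f \<equiv> f_fun n p l A C X0 W sigma"

definition info_form :: "nat \<Rightarrow> real vec \<Rightarrow> real vec \<Rightarrow> real" where
  "info_form j u v = (\<Sum>t<l. (info_vec n l A C sigma j t \<bullet> u) * (info_vec n l A C sigma j t \<bullet> v))"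

lemma info_form_nonneg: "0 \<le> info_form j x x"
  unfolding info_form_def by (intro sum_nonneg) auto

lemma info_form_sym: "info_form j u v = info_form j v u"
  unfolding info_form_def by (simp add: mult.commute)

lemma N_pos: "0 < N"
  using n_pos l_pos by simp

lemma L_props: "L \<in> carrier_mat N N" "transpose_mat L = L" "pos_def N L"
  using L_mat_props[OF X0 W] by auto

lemma U_carrier: "S \<subseteq> {..<p} \<Longrightarrow> U S \<in> carrier_mat N N"
  using U_mat_carrier[OF C _ sigma_pos] by blast

lemma U_quad_form:
  "S \<subseteq> {..<p} \<Longrightarrow> u \<in> carrier_vec N \<Longrightarrow> v \<in> carrier_vec N \<Longrightarrow>
    u \<bullet> (U S *\<^sub>v v) = (\<Sum>j\<in>S. info_form j u v)"
  using U_mat_quad_form[OF n_pos C sigma_pos] by (simp add: info_form_def sum.swap[of _ "{..<l}"])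

lemma U_sym:
  assumes S: "S \<subseteq> {..<p}"
  shows "transpose_mat (U S) = U S"
proof (rule eq_matI)
  fix r c assume "r < dim_row (U S)" "c < dim_col (U S)"
  then have rc: "r < N" "c < N" using U_carrier[OF S] by auto
  have "transpose_mat (U S) $$ (r, c) = unit_vec N c \<bullet> (U S *\<^sub>v unit_vec N r)"
    using rc U_carrier[OF S] by (simp add: quad_form_unit_vec)
  also have "\<dots> = unit_vec N r \<bullet> (U S *\<^sub>v unit_vec N c)"
    using U_quad_form[OF S] by (simp add: info_form_sym[of _ "unit_vec N c"])
  finally show "transpose_mat (U S) $$ (r, c) = U S $$ (r, c)"
    using rc U_carrier[OF S] by (simp add: quad_form_unit_vec)
qed (use U_carrier[OF S] in auto)

lemma U_diff_quad_form:
  assumes ST: "S \<subseteq> T" and T: "T \<subseteq> {..<p}" and u: "u \<in> carrier_vec N" and v: "v \<in> carrier_vec N"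
  shows "u \<bullet> ((U T - U S) *\<^sub>v v) = (\<Sum>j\<in>T - S. info_form j u v)"
proof -
  have S: "S \<subseteq> {..<p}" using ST T by auto
  have "u \<bullet> ((U T - U S) *\<^sub>v v) = u \<bullet> (U T *\<^sub>v v) - u \<bullet> (U S *\<^sub>v v)"
    using u v U_carrier[OF S] U_carrier[OF T]
    by (simp add: minus_mult_distrib_mat_vec scalar_prod_minus_distrib[of _ N])
  also have "\<dots> = (\<Sum>j\<in>T - S. info_form j u v)"
    using U_quad_form[OF T u v] U_quad_form[OF S u v]
      sum.subset_diff[OF ST finite_subset[OF T], of "\<lambda>j. info_form j u v"]
    by simp
  finally show ?thesis .
qed

lemma M_quad_form:
  "S \<subseteq> {..<p} \<Longrightarrow> u \<in> carrier_vec N \<Longrightarrow> v \<in> carrier_vec N \<Longrightarrow>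
    u \<bullet> (M S *\<^sub>v v) = u \<bullet> (L *\<^sub>v v) + (\<Sum>j\<in>S. info_form j u v)"
  using quad_form_add_mat[OF L_props(1) U_carrier] U_quad_form by simp

lemma M_props:
  assumes S: "S \<subseteq> {..<p}"
  shows "M S \<in> carrier_mat N N" "transpose_mat (M S) = M S" "pos_def N (M S)"
proof -
  show "M S \<in> carrier_mat N N" using L_props(1) U_carrier[OF S] by simp
  show "transpose_mat (M S) = M S" using L_props U_carrier[OF S] U_sym[OF S] by (simp add: transpose_add)
  have "0 < x \<bullet> (M S *\<^sub>v x)" if "x \<in> carrier_vec N" "x \<noteq> 0\<^sub>v N" for x
  proof -
    have "0 < x \<bullet> (L *\<^sub>v x)" using L_props(3) that by (simp add: pos_def_def)
    moreover have "0 \<le> (\<Sum>j\<in>S. info_form j x x)" by (intro sum_nonneg info_form_nonneg)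
    ultimately show ?thesis using M_quad_form[OF S that(1) that(1)] by simp
  qed
  then show "pos_def N (M S)" by (simp add: pos_def_def)
qed

lemma M_inverse:
  assumes S: "S \<subseteq> {..<p}"
  shows "minv (M S) \<in> carrier_mat N N" "M S * minv (M S) = 1\<^sub>m N" "transpose_mat (minv (M S)) = minv (M S)"
  using pos_def_minv[OF M_props(1,3)[OF S]] inverse_sym[OF M_props(1,2)[OF S]] by auto

lemma M_mult_inverse_vec:
  assumes S: "S \<subseteq> {..<p}" and e: "e \<in> carrier_vec N"
  shows "M S *\<^sub>v (minv (M S) *\<^sub>v e) = e"
  using assoc_mult_mat_vec[OF M_props(1)[OF S] M_inverse(1)[OF S] e, symmetric] M_inverse(2)[OF S] e by simp

text \<open>\<open>inv_info_trace X T = tr (M\<^sub>X\<^sup>-\<^sup>1 U' M\<^sub>X\<^sup>-\<^sup>1)\<close> with \<open>U'\<close> the information contributed by the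
  sensors in \<open>T\<close>; it controls the decrease \<open>J S - J T\<close>.\<close>

definition inv_info_trace :: "nat set \<Rightarrow> nat set \<Rightarrow> real" where
  "inv_info_trace X T =
     (\<Sum>i<N. \<Sum>j\<in>T. info_form j (minv (M X) *\<^sub>v unit_vec N i) (minv (M X) *\<^sub>v unit_vec N i))"

lemma inv_info_trace_nonneg: "0 \<le> inv_info_trace X T"
  unfolding inv_info_trace_def by (intro sum_nonneg info_form_nonneg)

lemma inv_info_trace_singleton:
  assumes X: "X \<subseteq> {..<p}"
  shows "inv_info_trace X {j} =
    (\<Sum>t<l. (minv (M X) *\<^sub>v info_vec n l A C sigma j t) \<bullet> (minv (M X) *\<^sub>v info_vec n l A C sigma j t))"
proof -
  have "inv_info_trace X {j} =
      (\<Sum>t<l. \<Sum>i<N. (info_vec n l A C sigma j t \<bullet> (minv (M X) *\<^sub>v unit_vec N i))\<^sup>2)"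
    unfolding inv_info_trace_def info_form_def by (subst sum.swap) (simp add: power2_eq_square)
  then show ?thesis using sum_sq_quad_form_unit_vec[OF M_inverse(1,3)[OF X] info_vec_carrier] by simp
qed

lemma J_diff_bounds:
  assumes ST: "S \<subseteq> T" and T: "T \<subseteq> {..<p}"
  shows "J S - J T \<le> inv_info_trace S (T - S)"
    and "inv_info_trace T (T - S) \<le> J S - J T"
    and "\<And>c. c \<le> 1 \<Longrightarrow> (\<And>v. v \<in> carrier_vec N \<Longrightarrow> c * (v \<bullet> (M T *\<^sub>v v)) \<le> v \<bullet> (M S *\<^sub>v v)) \<Longrightarrow>
          c * inv_info_trace S (T - S) \<le> J S - J T"
proof -
  have S: "S \<subseteq> {..<p}" using ST T by auto
  define B where "B = U T - U S"
  have B: "B \<in> carrier_mat N N" using minus_carrier_mat[OF U_carrier[OF S]] by (simp add: B_def)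
  note B_quad_form = U_diff_quad_form[OF ST T, folded B_def]
  have B_props: "transpose_mat B = B" "pos_semidef N B"
    using U_carrier[OF S] U_carrier[OF T] U_sym[OF S] U_sym[OF T] B_quad_form
    by (auto simp: B_def transpose_minus pos_semidef_def intro!: sum_nonneg info_form_nonneg)
  have MB: "M S + B = M T"
    using L_props(1) U_carrier[OF S] U_carrier[OF T] by (intro eq_matI) (auto simp: B_def)
  define y where "y i = minv (M S) *\<^sub>v unit_vec N i" for i
  define z where "z i = minv (M T) *\<^sub>v unit_vec N i" for i
  have yz: "y i \<in> carrier_vec N" "z i \<in> carrier_vec N" "M S *\<^sub>v y i = unit_vec N i" "(M S + B) *\<^sub>v z i = unit_vec N i" for i
    using M_inverse(1)[OF S] M_inverse(1)[OF T] M_mult_inverse_vec[OF S] M_mult_inverse_vec[OF T] MB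
    by (auto simp: y_def z_def)
  note bounds = inverse_update_bounds[OF M_props(1,2)[OF S] pos_def_imp_pos_semidef[OF M_props(1,3)[OF S]]
      B B_props unit_vec_carrier yz]
  have J_diff: "J S - J T = (\<Sum>i<N. unit_vec N i \<bullet> y i - unit_vec N i \<bullet> z i)"
    using mtrace_unit_vec[OF M_inverse(1)[OF S]] mtrace_unit_vec[OF M_inverse(1)[OF T]]
    by (simp add: J_fun_def y_def z_def sum_subtractf)
  have trace_eq: "inv_info_trace S (T - S) = (\<Sum>i<N. y i \<bullet> (B *\<^sub>v y i))"
    "inv_info_trace T (T - S) = (\<Sum>i<N. z i \<bullet> (B *\<^sub>v z i))"
    using B_quad_form yz by (simp_all add: inv_info_trace_def y_def z_def)
  show "J S - J T \<le> inv_info_trace S (T - S)"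
    unfolding J_diff trace_eq by (intro sum_mono bounds(2))
  show "inv_info_trace T (T - S) \<le> J S - J T"
    unfolding J_diff trace_eq by (intro sum_mono bounds(1))
  fix c assume "c \<le> 1" and scaled: "\<And>v. v \<in> carrier_vec N \<Longrightarrow> c * (v \<bullet> (M T *\<^sub>v v)) \<le> v \<bullet> (M S *\<^sub>v v)"
  show "c * inv_info_trace S (T - S) \<le> J S - J T"
    unfolding J_diff trace_eq sum_distrib_left
    using bounds(3)[OF \<open>c \<le> 1\<close>] scaled MB by (intro sum_mono) (simp add: add.assoc)
qed


lemma f_empty: "f {} = 0"
  by (simp add: f_fun_def)

lemma marg_f: "marg f X S = J S - J (S \<union> X)"
  by (simp add: marg_def f_fun_def)

lemma f_mono:
  assumes "S \<subseteq> {..<p}" "X \<subseteq> {..<p}"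
  shows "f S \<le> f (S \<union> X)"
  using J_diff_bounds(2)[of S "S \<union> X"] inv_info_trace_nonneg[of "S \<union> X" "S \<union> X - S"] assms
  by (simp add: f_fun_def)

abbreviation "lmin \<equiv> lambda_min L"
abbreviation "lmax \<equiv> lambda_max (M {..<p})"
abbreviation "ratio \<equiv> lmin / lmax"

lemma lmin_pos: "0 < lmin"
  using lambda_min_rayleigh(1)[OF L_props(1,2) N_pos] pos_def_eigenvalue_pos[OF L_props(1,3)] by blast

lemma lmax_pos: "0 < lmax"
  using lambda_max_rayleigh(1)[OF M_props(1,2) N_pos] pos_def_eigenvalue_pos[OF M_props(1,3)] by blast

lemma M_lower:
  assumes S: "S \<subseteq> {..<p}" and v: "v \<in> carrier_vec N"
  shows "lmin * (v \<bullet> v) \<le> v \<bullet> (M S *\<^sub>v v)"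
  using lambda_min_rayleigh(2)[OF L_props(1,2) N_pos v] M_quad_form[OF S v v]
    sum_nonneg[of S "\<lambda>j. info_form j v v"] info_form_nonneg by simp

lemma M_upper:
  assumes S: "S \<subseteq> {..<p}" and v: "v \<in> carrier_vec N"
  shows "v \<bullet> (M S *\<^sub>v v) \<le> lmax * (v \<bullet> v)"
proof -
  have "(\<Sum>j\<in>S. info_form j v v) \<le> (\<Sum>j\<in>{..<p}. info_form j v v)"
    using S info_form_nonneg by (intro sum_mono2) auto
  then have "v \<bullet> (M S *\<^sub>v v) \<le> v \<bullet> (M {..<p} *\<^sub>v v)"
    using M_quad_form[OF S v v] M_quad_form[OF _ v v, of "{..<p}"] by simp
  also have "\<dots> \<le> lmax * (v \<bullet> v)" by (rule lambda_max_rayleigh(2)[OF M_props(1,2)[OF subset_refl] N_pos v])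
  finally show ?thesis .
qed

lemma ratio_bounds: "0 \<le> ratio" "ratio \<le> 1"
proof -
  show "0 \<le> ratio" using lmin_pos lmax_pos by simp
  have "unit_vec N 0 \<bullet> unit_vec N 0 = (1 :: real)" using N_pos by simp
  then have "lmin \<le> lmax"
    using M_lower[of "{..<p}" "unit_vec N 0"] M_upper[of "{..<p}" "unit_vec N 0"] by simp
  then show "ratio \<le> 1" using lmax_pos by simp
qed

lemma M_ratio_le:
  assumes "S \<subseteq> {..<p}" "T \<subseteq> {..<p}" "v \<in> carrier_vec N"
  shows "ratio * (v \<bullet> (M T *\<^sub>v v)) \<le> v \<bullet> (M S *\<^sub>v v)"
proof -
  have "ratio * (v \<bullet> (M T *\<^sub>v v)) \<le> ratio * (lmax * (v \<bullet> v))"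
    using M_upper[OF assms(2,3)] ratio_bounds(1) by (rule mult_left_mono)
  also have "\<dots> = lmin * (v \<bullet> v)" using lmax_pos by simp
  also have "\<dots> \<le> v \<bullet> (M S *\<^sub>v v)" by (rule M_lower[OF assms(1,3)])
  finally show ?thesis .
qed

lemma weakly_submodular_ratio: "weakly_submodular f {..<p} ratio"
  unfolding weakly_submodular_def
proof (intro allI impI)
  fix Om S assume Om: "Om \<subseteq> {..<p}" and S: "S \<subseteq> {..<p}"
  have "marg f Om S \<le> inv_info_trace S (Om - S)"
    using J_diff_bounds(1)[of S "S \<union> Om"] Om S by (simp add: marg_f Un_Diff)
  then have "ratio * marg f Om S \<le> ratio * inv_info_trace S (Om - S)"
    by (rule mult_left_mono[OF _ ratio_bounds(1)])
  also have "\<dots> = (\<Sum>w\<in>Om - S. ratio * inv_info_trace S {w})"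
    by (simp add: inv_info_trace_def sum_distrib_left sum.swap[of _ "{..<N}"])
  also have "\<dots> \<le> (\<Sum>w\<in>Om - S. marg f {w} S)"
  proof (rule sum_mono)
    fix w assume "w \<in> Om - S"
    then have "S \<subseteq> S \<union> {w}" "S \<union> {w} \<subseteq> {..<p}" "S \<union> {w} - S = {w}" using Om S by auto
    then show "ratio * inv_info_trace S {w} \<le> marg f {w} S"
      using J_diff_bounds(3)[of S "S \<union> {w}" ratio] ratio_bounds(2) M_ratio_le[OF S] by (simp add: marg_f)
  qed
  finally show "ratio * marg f Om S \<le> (\<Sum>w\<in>Om - S. marg f {w} S)" .
qed

lemma inverse_norm_ratio:
  assumes S: "S \<subseteq> {..<p}" and T: "T \<subseteq> {..<p}" and h: "h \<in> carrier_vec N"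
  shows "ratio\<^sup>2 * ((minv (M S) *\<^sub>v h) \<bullet> (minv (M S) *\<^sub>v h)) \<le> (minv (M T) *\<^sub>v h) \<bullet> (minv (M T) *\<^sub>v h)"
proof -
  define v where "v = minv (M S) *\<^sub>v h"
  define w where "w = minv (M T) *\<^sub>v h"
  have v: "v \<in> carrier_vec N" "M S *\<^sub>v v = h"
    using M_inverse(1)[OF S] M_mult_inverse_vec[OF S h] h by (simp_all add: v_def)
  have w: "w \<in> carrier_vec N" "M T *\<^sub>v w = h"
    using M_inverse(1)[OF T] M_mult_inverse_vec[OF T h] h by (simp_all add: w_def)
  have "lmin\<^sup>2 * (v \<bullet> v) \<le> h \<bullet> h"
    using mult_vec_sq_norm_lower[OF M_props(1)[OF S] v(1) M_lower[OF S v(1)]] lmin_pos v(2) by simp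
  also have "\<dots> \<le> lmax\<^sup>2 * (w \<bullet> w)"
    using mult_vec_sq_norm_upper[OF M_props(1,2)[OF T] pos_def_imp_pos_semidef[OF M_props(1,3)[OF T]] M_upper[OF T] w(1)] w(2)
    by simp
  finally show ?thesis using lmax_pos by (simp add: v_def w_def power_divide field_simps)
qed

lemma bounded_curvature_ratio: "bounded_curvature f {..<p} (1 - ratio\<^sup>2)"
  unfolding bounded_curvature_def
proof (intro allI impI)
  fix Om S j assume Om: "Om \<subseteq> {..<p}" and S: "S \<subseteq> {..<p}" and j: "j \<in> S - Om"
  define T0 where "T0 = S - {j}"
  define T1 where "T1 = T0 \<union> Om"
  have sets: "T0 \<subseteq> {..<p}" "T1 \<subseteq> {..<p}" "insert j T0 \<subseteq> {..<p}" "insert j T1 \<subseteq> {..<p}"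
    "insert j T0 - T0 = {j}" "insert j T1 - T1 = {j}"
    using S Om j by (auto simp: T0_def T1_def)
  have "marg f {j} T0 \<le> inv_info_trace T0 {j}"
    using J_diff_bounds(1)[OF subset_insertI sets(3)] sets by (simp add: marg_f)
  then have "ratio\<^sup>2 * marg f {j} T0 \<le> ratio\<^sup>2 * inv_info_trace T0 {j}"
    by (simp add: mult_left_mono)
  also have "\<dots> \<le> inv_info_trace (insert j T1) {j}"
    unfolding inv_info_trace_singleton[OF sets(1)] inv_info_trace_singleton[OF sets(4)] sum_distrib_left
    by (intro sum_mono inverse_norm_ratio[OF sets(1,4)]) simp
  also have "\<dots> \<le> marg f {j} T1"
    using J_diff_bounds(2)[OF subset_insertI sets(4)] sets by (simp add: marg_f)
  finally show "(1 - (1 - ratio\<^sup>2)) * marg f {j} (S - {j}) \<le> marg f {j} ((S - {j}) \<union> Om)"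
    by (simp add: T0_def T1_def)
qed

end

theorem corollary1:
  fixes n p l s :: nat and A C X0 W :: "real mat" and sigma :: "nat \<Rightarrow> real"
    and Sopt Sg :: "nat set"
  defines "f \<equiv> f_fun n p l A C X0 W sigma"
  assumes "0 < n" and "0 < p" and "0 < l"
    and "A \<in> carrier_mat n n" and "C \<in> carrier_mat p n"
    and "sym_posdef n X0" and "sym_posdef n W"
    and "\<forall>i<p. sigma i > 0"
    and "0 < s" and "s \<le> p"
    and "Sopt \<subseteq> {..<p}" and "card Sopt \<le> s"
    and "\<forall>S. S \<subseteq> {..<p} \<longrightarrow> card S \<le> s \<longrightarrow> f S \<le> f Sopt"
    and "greedy_output f {..<p} s Sg"
  shows "f Sg \<ge> bound_factor (curvature f {..<p}) (subm_ratio f {..<p}) * f Sopt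
    \<and> bound_factor (curvature f {..<p}) (subm_ratio f {..<p}) * f Sopt
      \<ge> bound_factor (alpha_ub n p l A C X0 W sigma) (gamma_lb n p l A C X0 W sigma) * f Sopt"
proof -
  interpret smoothing_system n p l A C X0 W sigma
    using assms by unfold_locales auto
  have mono: "\<And>S X. S \<subseteq> {..<p} \<Longrightarrow> X \<subseteq> {..<p} \<Longrightarrow> f S \<le> f (S \<union> X)"
    unfolding f_def by (rule f_mono)
  note gamma = subm_ratio_greatest[of "{..<p}" f, OF mono]
    and alpha = curvature_least[of "{..<p}" f, OF mono]
  have "f {} = 0" "0 \<le> f Sopt" using f_empty mono[of "{}" Sopt] assms by (simp_all add: f_def)
  have greedy: "bound_factor (curvature f {..<p}) (subm_ratio f {..<p}) * f Sopt \<le> f Sg"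
    using greedy_output_guarantee[OF finite_lessThan \<open>f {} = 0\<close> mono _ _ _ _ gamma(2) alpha(2)]
      gamma(1) alpha(1) assms by auto
  have "ratio \<le> subm_ratio f {..<p}"
    using gamma(3) ratio_bounds weakly_submodular_ratio by (simp add: f_def)
  moreover have "curvature f {..<p} \<le> 1 - ratio\<^sup>2"
    using alpha(3) ratio_bounds bounded_curvature_ratio by (simp add: f_def power_le_one)
  ultimately have "bound_factor (1 - ratio\<^sup>2) ratio \<le> bound_factor (curvature f {..<p}) (subm_ratio f {..<p})"
    using bound_factor_mono_right[of "1 - ratio\<^sup>2" ratio "subm_ratio f {..<p}"]
      bound_factor_antimono_left[of "curvature f {..<p}" "1 - ratio\<^sup>2" "subm_ratio f {..<p}"]
      gamma(1) alpha(1) ratio_bounds by (simp add: power_le_one)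
  then have "bound_factor (1 - ratio\<^sup>2) ratio * f Sopt \<le> bound_factor (curvature f {..<p}) (subm_ratio f {..<p}) * f Sopt"
    using \<open>0 \<le> f Sopt\<close> by (rule mult_right_mono)
  then show ?thesis using greedy by (simp add: gamma_lb_def alpha_ub_def power_divide)
qed

end
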